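(* Let $n\ge2$ and $m\ge2n$. Let $F:\mathbb{B}^n\to D^{IV}_m$ be a holomorphic isometry which is a rational map with $F(0)=0$ and $\deg(F)=1$. Then there is a real orthogonal matrix $O\in O(m,\mathbb{R})$ such that $F(z)=\big(\tfrac{\sqrt2}{2}z_1,\tfrac{\sqrt{-2}}{2}z_1,\dots,\tfrac{\sqrt2}{2}z_n,\tfrac{\sqrt{-2}}{2}z_n,0,\dots,0\big)\,O$ for all $z\in\mathbb{B}^n$.
   Context: $\mathbb{B}^n=\{z\in\mathbb{C}^n:|z|^2<1\}$; $D^{IV}_m=\{Z\in\mathbb{C}^m: Z\overline{Z}^t<2,\ 1-Z\overline{Z}^t+\tfrac14|ZZ^t|^2>0\}$ (row vectors). Bergman metric $\omega_\Omega=\sqrt{-1}\partial\bar\partial\log K_\Omega$ with $K_{\mathbb{B}^n}=c(1-|z|^2)^{-(n+1)}$, $K_{D^{IV}_m}=c'(1-Z\overline{Z}^t+\tfrac14|ZZ^t|^2)^{-m}$; $F$ is a holomorphic isometry if $F^*\omega_{D^{IV}_m}=\lambda\omega_{\mathbb{B}^n}$ for a constant $\lambda>0$. For a rational map $F=(P_1,\dots,P_m)/R$ in lowest terms, $\deg(F)=\max\{\deg P_1,\dots,\deg P_m,\deg R\}$. *)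

theory Defs
  imports "HOL-Analysis.Analysis"
begin

text \<open>Points of C^N are represented as functions nat => complex; only the
coordinates 0..N-1 (i.e. z_1..z_N of the paper) are meaningful.\<close>

definition normsq :: "nat \<Rightarrow> (nat \<Rightarrow> complex) \<Rightarrow> real" where
  "normsq N z = (\<Sum>k<N. (cmod (z k))^2)"

definition unit_ball :: "nat \<Rightarrow> (nat \<Rightarrow> complex) set" where
  "unit_ball n = {z. (\<forall>k\<ge>n. z k = 0) \<and> normsq n z < 1}"

definition hIV :: "nat \<Rightarrow> (nat \<Rightarrow> complex) \<Rightarrow> real" where
  "hIV m Z = 1 - normsq m Z + (cmod (\<Sum>k<m. (Z k)^2))^2 / 4"

definition typeIV :: "nat \<Rightarrow> (nat \<Rightarrow> complex) set" where
  "typeIV m = {Z. normsq m Z < 2 \<and> hIV m Z > 0}"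

text \<open>Bergman kernels (normalising positive constants omitted: they do not
affect the Bergman metric).\<close>
definition K_ball :: "nat \<Rightarrow> (nat \<Rightarrow> complex) \<Rightarrow> real" where
  "K_ball n z = (1 - normsq n z) powr (- real (n + 1))"

definition K_IV :: "nat \<Rightarrow> (nat \<Rightarrow> complex) \<Rightarrow> real" where
  "K_IV m Z = (hIV m Z) powr (- real m)"

definition dx :: "nat \<Rightarrow> ((nat \<Rightarrow> complex) \<Rightarrow> complex) \<Rightarrow> (nat \<Rightarrow> complex) \<Rightarrow> complex" where
  "dx j f z = vector_derivative (\<lambda>t::real. f (z(j := z j + complex_of_real t))) (at 0)"

definition dy :: "nat \<Rightarrow> ((nat \<Rightarrow> complex) \<Rightarrow> complex) \<Rightarrow> (nat \<Rightarrow> complex) \<Rightarrow> complex" where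
  "dy j f z = vector_derivative (\<lambda>t::real. f (z(j := z j + \<i> * complex_of_real t))) (at 0)"

definition dz :: "nat \<Rightarrow> ((nat \<Rightarrow> complex) \<Rightarrow> complex) \<Rightarrow> (nat \<Rightarrow> complex) \<Rightarrow> complex" where
  "dz j f z = (dx j f z - \<i> * dy j f z) / 2"

definition dzbar :: "nat \<Rightarrow> ((nat \<Rightarrow> complex) \<Rightarrow> complex) \<Rightarrow> (nat \<Rightarrow> complex) \<Rightarrow> complex" where
  "dzbar j f z = (dx j f z + \<i> * dy j f z) / 2"

text \<open>Coefficients g_{jk} of the Bergman metric omega = sqrt(-1) d dbar log K
= sqrt(-1) sum g_{jk} dz_j /\ dzbar_k, i.e. g_{jk} = d^2 log K / dz_j dzbar_k.\<close>
definition bergman_coeff :: "((nat \<Rightarrow> complex) \<Rightarrow> real) \<Rightarrow> nat \<Rightarrow> nat \<Rightarrow> (nat \<Rightarrow> complex) \<Rightarrow> complex" where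
  "bergman_coeff K j k z = dz j (dzbar k (\<lambda>w. complex_of_real (ln (K w)))) z"

definition pullback_coeff ::
  "nat \<Rightarrow> (nat \<Rightarrow> nat \<Rightarrow> (nat \<Rightarrow> complex) \<Rightarrow> complex) \<Rightarrow> ((nat \<Rightarrow> complex) \<Rightarrow> (nat \<Rightarrow> complex))
     \<Rightarrow> nat \<Rightarrow> nat \<Rightarrow> (nat \<Rightarrow> complex) \<Rightarrow> complex" where
  "pullback_coeff m g F j k z =
     (\<Sum>a<m. \<Sum>b<m. g a b (F z) * dz j (\<lambda>w. F w a) z * cnj (dz k (\<lambda>w. F w b) z))"

definition cdiff_at :: "nat \<Rightarrow> ((nat \<Rightarrow> complex) \<Rightarrow> complex) \<Rightarrow> (nat \<Rightarrow> complex) \<Rightarrow> bool" where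
  "cdiff_at n f z \<longleftrightarrow> (\<exists>a::nat \<Rightarrow> complex. \<forall>e>0. \<exists>d>0. \<forall>w. (\<forall>k\<ge>n. w k = 0) \<and> sqrt (normsq n (\<lambda>k. w k - z k)) < d
        \<longrightarrow> cmod (f w - f z - (\<Sum>k<n. a k * (w k - z k))) \<le> e * sqrt (normsq n (\<lambda>k. w k - z k)))"

definition holomorphic_map :: "nat \<Rightarrow> nat \<Rightarrow> (nat \<Rightarrow> complex) set \<Rightarrow> ((nat \<Rightarrow> complex) \<Rightarrow> (nat \<Rightarrow> complex)) \<Rightarrow> bool" where
  "holomorphic_map n m U F \<longleftrightarrow> (\<forall>z\<in>U. \<forall>j<m. cdiff_at n (\<lambda>w. F w j) z)"

definition holo_isometry :: "nat \<Rightarrow> nat \<Rightarrow> ((nat \<Rightarrow> complex) \<Rightarrow> (nat \<Rightarrow> complex)) \<Rightarrow> bool" where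
  "holo_isometry n m F \<longleftrightarrow>
     (\<forall>z\<in>unit_ball n. F z \<in> typeIV m) \<and> holomorphic_map n m (unit_ball n) F \<and>
     (\<exists>c>0. \<forall>z\<in>unit_ball n. \<forall>j<n. \<forall>k<n.
        pullback_coeff m (bergman_coeff (K_IV m)) F j k z = complex_of_real c * bergman_coeff (K_ball n) j k z)"

text \<open>Polynomials in n complex variables, given by finitely supported coefficient
functions on exponent vectors alpha (with alpha k = 0 for k >= n).\<close>
definition is_mpoly :: "nat \<Rightarrow> ((nat \<Rightarrow> nat) \<Rightarrow> complex) \<Rightarrow> bool" where
  "is_mpoly n c \<longleftrightarrow> finite {\<alpha>. c \<alpha> \<noteq> 0} \<and> (\<forall>\<alpha>. c \<alpha> \<noteq> 0 \<longrightarrow> (\<forall>k\<ge>n. \<alpha> k = 0))"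

definition mpoly_eval :: "nat \<Rightarrow> ((nat \<Rightarrow> nat) \<Rightarrow> complex) \<Rightarrow> (nat \<Rightarrow> complex) \<Rightarrow> complex" where
  "mpoly_eval n c z = (\<Sum>\<alpha>\<in>{\<alpha>. c \<alpha> \<noteq> 0}. c \<alpha> * (\<Prod>k<n. z k ^ \<alpha> k))"

definition mpoly_deg :: "nat \<Rightarrow> ((nat \<Rightarrow> nat) \<Rightarrow> complex) \<Rightarrow> nat" where
  "mpoly_deg n c = Max (insert 0 {(\<Sum>k<n. \<alpha> k) | \<alpha>. c \<alpha> \<noteq> 0})"

definition rational_rep :: "nat \<Rightarrow> nat \<Rightarrow> ((nat \<Rightarrow> complex) \<Rightarrow> (nat \<Rightarrow> complex)) \<Rightarrow> nat \<Rightarrow> bool" where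
  "rational_rep n m F d \<longleftrightarrow> (\<exists>P R. is_mpoly n R \<and> (\<exists>\<alpha>. R \<alpha> \<noteq> 0) \<and> mpoly_deg n R \<le> d \<and>
      (\<forall>j<m. is_mpoly n (P j) \<and> mpoly_deg n (P j) \<le> d) \<and>
      (\<forall>z\<in>unit_ball n. \<forall>j<m. mpoly_eval n R z * F z j = mpoly_eval n (P j) z))"

definition is_rational_map :: "nat \<Rightarrow> nat \<Rightarrow> ((nat \<Rightarrow> complex) \<Rightarrow> (nat \<Rightarrow> complex)) \<Rightarrow> bool" where
  "is_rational_map n m F \<longleftrightarrow> (\<exists>d. rational_rep n m F d)"

text \<open>deg(F) = max degree in the lowest-terms representation, which equals the
minimal such max degree over all representations.\<close>
definition rat_deg :: "nat \<Rightarrow> nat \<Rightarrow> ((nat \<Rightarrow> complex) \<Rightarrow> (nat \<Rightarrow> complex)) \<Rightarrow> nat" where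
  "rat_deg n m F = (LEAST d. rational_rep n m F d)"

definition orthogonal_mat :: "nat \<Rightarrow> (nat \<Rightarrow> nat \<Rightarrow> real) \<Rightarrow> bool" where
  "orthogonal_mat m Q \<longleftrightarrow> (\<forall>i<m. \<forall>j<m. (\<Sum>k<m. Q k i * Q k j) = (if i = j then 1 else 0))"

text \<open>The model vector (sqrt2/2 z_1, sqrt(-2)/2 z_1, ..., sqrt2/2 z_n, sqrt(-2)/2 z_n, 0, ..., 0),
0-based: position 2k holds sqrt2/2 z_k, position 2k+1 holds sqrt(-2)/2 z_k = i sqrt2/2 z_k.\<close>
definition model_vec :: "nat \<Rightarrow> (nat \<Rightarrow> complex) \<Rightarrow> nat \<Rightarrow> complex" where
  "model_vec n z i = (if i < 2 * n then
       (if even i then complex_of_real (sqrt 2 / 2) * z (i div 2)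
        else \<i> * complex_of_real (sqrt 2 / 2) * z (i div 2))
     else 0)"

end

theory Submission
  imports Defs "HOL-Computational_Algebra.Polynomial"
begin

text \<open>
  A degree-one rational map with F(0) = 0 is a linear fractional map F(z) = A z / (1 + r z):
  if the denominator had no constant term, F would be constant on rays through 0, hence
  locally constant, and could not be an isometry. Restricting the isometry equation to the
  complex line through a direction u and contracting it with u and its conjugate gives, for
  real x, an identity between two polynomials in x; comparing the coefficients of x^0, x^1,
  x^2 shows that the length of A u is a fixed multiple of the length of u, that
  Re (r u) = 0, and that the quadratic form (A u)(A u)^t is controlled by these lengths.
  Since n \<ge> 2 this quadratic form has a nontrivial zero, which forces the multiple to be 1,
  hence r = 0, A A^* = I and A A^t = 0. Then the real and imaginary parts of the rows of A,
  scaled by sqrt 2, form 2n orthonormal vectors of R^m, and completing them by Householder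
  reflections to an orthogonal matrix O gives F(z) = (model vector of z) O.
\<close>

section \<open>Bergman metric coefficients of the ball and of the Lie ball\<close>

lemma of_real_cmod_power2: "(complex_of_real (cmod z))^2 = z * cnj z"
  using complex_norm_square[of z] by simp

lemma pos_near_0:
  fixes \<phi> :: "complex \<Rightarrow> real"
  assumes "continuous (at 0) \<phi>" "\<phi> 0 > 0"
  shows "\<exists>\<delta>>0. \<forall>\<zeta>. cmod \<zeta> < \<delta> \<longrightarrow> \<phi> \<zeta> > 0"
proof -
  from assms have "\<forall>\<^sub>F \<zeta> in nhds 0. \<phi> \<zeta> > 0"
    by (metis continuous_at order_tendstoD(1) tendsto_at_iff_tendsto_nhds)
  then obtain \<delta> where "\<delta> > 0" "\<forall>\<zeta>. dist \<zeta> 0 < \<delta> \<longrightarrow> \<phi> \<zeta> > 0"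
    by (auto simp: eventually_nhds_metric)
  thus ?thesis by auto
qed

lemma normsq_fun_upd:
  assumes "k < N"
  shows "normsq N (z(k := v)) = normsq N z - (cmod (z k))^2 + (cmod v)^2"
  unfolding normsq_def using assms by (simp add: sum.remove[of "{..<N}" k])

lemma of_real_normsq_fun_upd:
  assumes "k < N"
  shows "complex_of_real (normsq N (z(k := v))) = of_real (normsq N z) - z k * cnj (z k) + v * cnj v"
  using normsq_fun_upd[OF assms] complex_norm_square[of v] complex_norm_square[of "z k"] by simp

lemma normsq_scale: "normsq n (\<lambda>k. complex_of_real x * u k) = x^2 * normsq n u"
  unfolding normsq_def by (simp add: norm_mult power_mult_distrib sum_distrib_left)

lemma normsq_cong: "(\<And>a. a < m \<Longrightarrow> Z a = Z' a) \<Longrightarrow> normsq m Z = normsq m Z'"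
  unfolding normsq_def by (rule sum.cong) auto

lemma sum_power2_fun_upd:
  fixes z :: "nat \<Rightarrow> complex"
  assumes "k < N"
  shows "(\<Sum>i<N. ((z(k := v)) i)^2) = (\<Sum>i<N. (z i)^2) - (z k)^2 + v^2"
  using assms by (simp add: sum.remove[of "{..<N}" k])

lemma dz_dzbar_eqI:
  fixes f :: "(nat \<Rightarrow> complex) \<Rightarrow> complex" and g :: "complex \<Rightarrow> complex \<Rightarrow> complex"
  assumes dpos: "\<delta> > 0"
    and eq: "\<And>\<zeta>. cmod \<zeta> < \<delta> \<Longrightarrow> f (z(j := z j + \<zeta>)) = g \<zeta> (cnj \<zeta>)"
    and d: "\<And>c. c = 1 \<or> c = \<i> \<Longrightarrow> ((\<lambda>\<zeta>. g (c*\<zeta>) (cnj c*\<zeta>)) has_field_derivative (c*ga + cnj c*gb)) (at 0)"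
  shows "dz j f z = ga" "dzbar j f z = gb"
proof -
  have directional: "vector_derivative (\<lambda>t::real. f (z(j := z j + c * complex_of_real t))) (at 0) = c*ga + cnj c*gb"
    if c: "c = 1 \<or> c = \<i>" for c
  proof -
    have cm: "cmod c = 1" using c by auto
    have h1: "((\<lambda>t::real. g (c * of_real t) (cnj c * of_real t)) has_vector_derivative (c*ga + cnj c*gb)) (at 0)"
      using has_vector_derivative_real_field[of "\<lambda>\<zeta>. g (c*\<zeta>) (cnj c*\<zeta>)" "c*ga + cnj c*gb" 0 UNIV] d[OF c]
      by simp
    have h2: "((\<lambda>t::real. f (z(j := z j + c * of_real t))) has_vector_derivative (c*ga + cnj c*gb)) (at 0)"
    proof (rule has_vector_derivative_transform_within_open[OF h1, of "ball 0 \<delta>"])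
      show "open (ball (0::real) \<delta>)" by simp
      show "(0::real) \<in> ball 0 \<delta>" using dpos by simp
      fix t :: real assume "t \<in> ball 0 \<delta>"
      hence "cmod (c * of_real t) < \<delta>" using cm by (simp add: norm_mult)
      from eq[OF this] show "g (c * of_real t) (cnj c * of_real t) = f (z(j := z j + c * of_real t))"
        by simp
    qed
    show ?thesis using vector_derivative_at[OF h2] .
  qed
  have dx: "dx j f z = ga + gb" using directional[of 1] by (simp add: dx_def)
  have dy: "dy j f z = \<i>*ga - \<i>*gb" using directional[of \<i>] by (simp add: dy_def)
  show "dz j f z = ga" unfolding dz_def dx dy by (simp add: algebra_simps)
  show "dzbar j f z = gb" unfolding dzbar_def dx dy by (simp add: algebra_simps)
qed

lemma dz_eq_0I:
  assumes "\<delta> > 0" "\<And>\<zeta>. cmod \<zeta> < \<delta> \<Longrightarrow> f (z(j := z j + \<zeta>)) = 0"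
  shows "dz j f z = 0"
  by (rule dz_dzbar_eqI(1)[OF assms(1), where g="\<lambda>_ _. 0" and gb=0]) (use assms(2) in auto)

lemma dzbar_ln_K_ball:
  assumes S1: "normsq n w < 1" and k: "k < n"
  shows "dzbar k (\<lambda>v. complex_of_real (ln (K_ball n v))) w
           = of_nat (n+1) * w k / (1 - of_real (normsq n w))"
proof -
  define S where "S = normsq n w"
  define a where "a = w k"
  define N where "N = (of_nat (n+1) :: complex)"
  define g where "g = (\<lambda>\<zeta> \<eta>. - N * Ln (1 - (of_real S - a * cnj a + (a + \<zeta>) * (cnj a + \<eta>))))"
  have "\<exists>\<delta>>0. \<forall>\<zeta>. cmod \<zeta> < \<delta> \<longrightarrow> 1 - (S - (cmod a)^2 + (cmod (a + \<zeta>))^2) > 0"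
    by (rule pos_near_0) (auto intro!: continuous_intros simp: S_def S1)
  then obtain \<delta> where dp: "\<delta> > 0" and dd: "\<And>\<zeta>. cmod \<zeta> < \<delta> \<Longrightarrow> 1 - (S - (cmod a)^2 + (cmod (a + \<zeta>))^2) > 0"
    by blast
  have "dzbar k (\<lambda>v. complex_of_real (ln (K_ball n v))) w = N * a / (1 - of_real S)"
  proof (rule dz_dzbar_eqI(2)[OF dp, where g=g and ga="N * cnj a / (1 - of_real S)"])
    fix \<zeta> :: complex assume z: "cmod \<zeta> < \<delta>"
    have pos: "1 - normsq n (w(k := w k + \<zeta>)) > 0"
      using dd[OF z] normsq_fun_upd[OF k] by (simp add: S_def a_def)
    have "complex_of_real (ln (K_ball n (w(k := w k + \<zeta>))))
          = - N * of_real (ln (1 - normsq n (w(k := w k + \<zeta>))))"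
      by (simp add: K_ball_def N_def)
    also have "of_real (ln (1 - normsq n (w(k := w k + \<zeta>)))) = Ln (of_real (1 - normsq n (w(k := w k + \<zeta>))))"
      using Ln_of_real[OF pos] by simp
    also have "\<dots> = Ln (1 - (of_real S - a * cnj a + (a + \<zeta>) * (cnj a + cnj \<zeta>)))"
      using of_real_normsq_fun_upd[OF k, of w "w k + \<zeta>"] by (simp add: S_def a_def)
    finally show "complex_of_real (ln (K_ball n (w(k := w k + \<zeta>)))) = g \<zeta> (cnj \<zeta>)"
      unfolding g_def .
  next
    fix c :: complex assume c: "c = 1 \<or> c = \<i>"
    have nn: "1 - (complex_of_real S - a * cnj a + (a + c * 0) * (cnj a + cnj c * 0)) \<notin> \<real>\<^sub>\<le>\<^sub>0"
      using S1 by (simp add: S_def complex_nonpos_Reals_iff)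
    have ne: "1 - complex_of_real S \<noteq> 0"
      using S1 by (metis S_def diff_gt_0_iff_gt of_real_1 of_real_diff of_real_eq_0_iff order_less_irrefl)
    show "((\<lambda>\<zeta>. g (c*\<zeta>) (cnj c*\<zeta>)) has_field_derivative (c * (N * cnj a / (1 - of_real S)) + cnj c * (N * a / (1 - of_real S)))) (at 0)"
      unfolding g_def
      apply (rule derivative_eq_intros refl nn)+
      using ne apply (simp add: inverse_eq_divide)
      apply (simp add: divide_simps)
      apply (simp add: algebra_simps)
      done
  qed
  thus ?thesis by (simp add: S_def a_def N_def)
qed

lemma bergman_coeff_K_ball:
  assumes S1: "normsq n z < 1" and j: "j < n" and k: "k < n"
  shows "bergman_coeff (K_ball n) j k z =
     of_nat (n+1) * ((if j = k then 1 else 0) / (1 - of_real (normsq n z))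
                     + z k * cnj (z j) / (1 - of_real (normsq n z))^2)"
proof -
  define S where "S = normsq n z"
  define a where "a = z j"
  define b where "b = z k"
  define d where "d = (if j = k then 1 else 0 :: complex)"
  define N where "N = (of_nat (n+1) :: complex)"
  define g where "g = (\<lambda>\<zeta> \<eta>. N * (b + d * \<zeta>) / (1 - (of_real S - a * cnj a + (a + \<zeta>) * (cnj a + \<eta>))))"
  have "\<exists>\<delta>>0. \<forall>\<zeta>. cmod \<zeta> < \<delta> \<longrightarrow> 1 - (S - (cmod a)^2 + (cmod (a + \<zeta>))^2) > 0"
    by (rule pos_near_0) (auto intro!: continuous_intros simp: S_def S1)
  then obtain \<delta> where dp: "\<delta> > 0" and dd: "\<And>\<zeta>. cmod \<zeta> < \<delta> \<Longrightarrow> 1 - (S - (cmod a)^2 + (cmod (a + \<zeta>))^2) > 0"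
    by blast
  have "dz j (dzbar k (\<lambda>v. complex_of_real (ln (K_ball n v)))) z
     = N * (d / (1 - of_real S) + b * cnj a / (1 - of_real S)^2)"
  proof (rule dz_dzbar_eqI(1)[OF dp, where g=g and gb="N * b * a / (1 - of_real S)^2"])
    fix \<zeta> :: complex assume zz: "cmod \<zeta> < \<delta>"
    have pos: "normsq n (z(j := z j + \<zeta>)) < 1"
      using dd[OF zz] normsq_fun_upd[OF j] by (simp add: S_def a_def)
    have zk: "(z(j := z j + \<zeta>)) k = b + d * \<zeta>" by (simp add: b_def d_def a_def)
    show "dzbar k (\<lambda>v. complex_of_real (ln (K_ball n v))) (z(j := z j + \<zeta>)) = g \<zeta> (cnj \<zeta>)"
      using dzbar_ln_K_ball[OF pos k] of_real_normsq_fun_upd[OF j, of z "z j + \<zeta>"]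
      unfolding zk g_def by (simp add: N_def S_def a_def)
  next
    fix c :: complex assume c: "c = 1 \<or> c = \<i>"
    have ne: "1 - complex_of_real S \<noteq> 0"
      using S1 by (metis S_def diff_gt_0_iff_gt of_real_1 of_real_diff of_real_eq_0_iff order_less_irrefl)
    have ne0: "1 - (complex_of_real S - a * cnj a + (a + c * 0) * (cnj a + cnj c * 0)) \<noteq> 0"
      using ne by simp
    show "((\<lambda>\<zeta>. g (c*\<zeta>) (cnj c*\<zeta>)) has_field_derivative
        (c * (N * (d / (1 - of_real S) + b * cnj a / (1 - of_real S)^2)) + cnj c * (N * b * a / (1 - of_real S)^2))) (at 0)"
      unfolding g_def
      apply (rule derivative_eq_intros refl ne0)+
      using ne apply (simp add: inverse_eq_divide)
      apply (simp add: divide_simps)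
      apply (simp add: algebra_simps power2_eq_square)
      done
  qed
  thus ?thesis by (simp add: bergman_coeff_def S_def a_def b_def d_def N_def)
qed

definition sum_sq :: "nat \<Rightarrow> (nat \<Rightarrow> complex) \<Rightarrow> complex" where
  "sum_sq m Z = (\<Sum>k<m. (Z k)^2)"

lemma sum_sq_cong: "(\<And>a. a < m \<Longrightarrow> Z a = Z' a) \<Longrightarrow> sum_sq m Z = sum_sq m Z'"
  unfolding sum_sq_def by (rule sum.cong) auto

lemma hIV_cong: "(\<And>a. a < m \<Longrightarrow> Z a = Z' a) \<Longrightarrow> hIV m Z = hIV m Z'"
  using sum_sq_cong[of m Z Z'] normsq_cong[of m Z Z'] unfolding hIV_def sum_sq_def by simp

lemma hIV_fun_upd:
  assumes "k < m"
  shows "hIV m (Z(k := v)) = 1 - (normsq m Z - (cmod (Z k))^2 + (cmod v)^2) + (cmod (sum_sq m Z - (Z k)^2 + v^2))^2 / 4"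
  unfolding hIV_def using normsq_fun_upd[OF assms] sum_power2_fun_upd[OF assms] by (simp add: sum_sq_def)

lemma of_real_hIV_fun_upd:
  assumes "k < m"
  shows "complex_of_real (hIV m (Z(k := v))) = 1 - (of_real (normsq m Z) - Z k * cnj (Z k) + v * cnj v)
     + (sum_sq m Z - (Z k)^2 + v^2) * (cnj (sum_sq m Z) - (cnj (Z k))^2 + (cnj v)^2) / 4"
  unfolding hIV_fun_upd[OF assms] using of_real_normsq_fun_upd[OF assms, of Z v]
    complex_norm_square[of "sum_sq m Z - (Z k)^2 + v^2"] complex_norm_square[of v] complex_norm_square[of "Z k"]
  by simp

lemma hIV_pos_near:
  assumes "hIV m Z > 0" "k < m"
  shows "\<exists>\<delta>>0. \<forall>\<zeta>. cmod \<zeta> < \<delta> \<longrightarrow> hIV m (Z(k := Z k + \<zeta>)) > 0"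
proof -
  have "\<exists>\<delta>>0. \<forall>\<zeta>. cmod \<zeta> < \<delta> \<longrightarrow> 1 - (normsq m Z - (cmod (Z k))^2 + (cmod (Z k + \<zeta>))^2) + (cmod (sum_sq m Z - (Z k)^2 + (Z k + \<zeta>)^2))^2 / 4 > 0"
    by (rule pos_near_0) (use assms hIV_fun_upd[OF assms(2), of Z "Z k"] in \<open>auto intro!: continuous_intros\<close>)
  thus ?thesis using hIV_fun_upd[OF assms(2)] by simp
qed

lemma dzbar_ln_K_IV:
  assumes h: "hIV m W > 0" and b: "b < m"
  shows "dzbar b (\<lambda>V. complex_of_real (ln (K_IV m V))) W
           = - of_nat m * (- W b + cnj (W b) * sum_sq m W / 2) / of_real (hIV m W)"
proof -
  define S where "S = normsq m W"
  define s where "s = sum_sq m W"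
  define a where "a = W b"
  define M where "M = (of_nat m :: complex)"
  define H where "H = (\<lambda>\<zeta> \<eta>. 1 - (of_real S - a * cnj a + (a + \<zeta>) * (cnj a + \<eta>))
     + (s - a^2 + (a + \<zeta>)^2) * (cnj s - (cnj a)^2 + (cnj a + \<eta>)^2) / 4)"
  define g where "g = (\<lambda>\<zeta> \<eta>. - M * Ln (H \<zeta> \<eta>))"
  obtain \<delta> where dp: "\<delta> > 0" and dd: "\<And>\<zeta>. cmod \<zeta> < \<delta> \<Longrightarrow> hIV m (W(b := W b + \<zeta>)) > 0"
    using hIV_pos_near[OF h b] by blast
  have H0: "H 0 0 = of_real (hIV m W)"
    using of_real_hIV_fun_upd[OF b, of W "W b"] by (simp add: H_def S_def s_def a_def)
  have "dzbar b (\<lambda>V. complex_of_real (ln (K_IV m V))) W = - M * (- a + cnj a * s / 2) / H 0 0"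
  proof (rule dz_dzbar_eqI(2)[OF dp, where g=g and ga="- M * (- cnj a + a * cnj s / 2) / H 0 0"])
    fix \<zeta> :: complex assume zz: "cmod \<zeta> < \<delta>"
    have pos: "hIV m (W(b := W b + \<zeta>)) > 0" using dd[OF zz] .
    have "complex_of_real (ln (K_IV m (W(b := W b + \<zeta>)))) = - M * of_real (ln (hIV m (W(b := W b + \<zeta>))))"
      by (simp add: K_IV_def M_def)
    also have "of_real (ln (hIV m (W(b := W b + \<zeta>)))) = Ln (of_real (hIV m (W(b := W b + \<zeta>))))"
      using Ln_of_real[OF pos] by simp
    also have "of_real (hIV m (W(b := W b + \<zeta>))) = H \<zeta> (cnj \<zeta>)"
      using of_real_hIV_fun_upd[OF b, of W "W b + \<zeta>"] by (simp add: H_def S_def s_def a_def)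
    finally show "complex_of_real (ln (K_IV m (W(b := W b + \<zeta>)))) = g \<zeta> (cnj \<zeta>)"
      unfolding g_def .
  next
    fix c :: complex assume c: "c = 1 \<or> c = \<i>"
    have nn: "H 0 0 \<notin> \<real>\<^sub>\<le>\<^sub>0" using H0 h by (simp add: complex_nonpos_Reals_iff)
    have ne: "H 0 0 \<noteq> 0" using H0 h by simp
    define Hd where "Hd = -(c*cnj a + cnj c*a) + (2*a*c*cnj s + s*2*cnj a*cnj c)/4"
    have dH: "((\<lambda>\<zeta>. H (c*\<zeta>) (cnj c*\<zeta>)) has_field_derivative Hd) (at 0)"
      unfolding H_def Hd_def by (auto intro!: derivative_eq_intros simp: algebra_simps)
    have "((\<lambda>\<zeta>. Ln (H (c*\<zeta>) (cnj c*\<zeta>))) has_field_derivative (inverse (H 0 0) * Hd)) (at 0)"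
      using DERIV_chain2[of Ln "inverse (H 0 0)" "\<lambda>\<zeta>. H (c*\<zeta>) (cnj c*\<zeta>)", OF _ dH]
        has_field_derivative_Ln[OF nn] by simp
    hence "((\<lambda>\<zeta>. g (c*\<zeta>) (cnj c*\<zeta>)) has_field_derivative (- M * (inverse (H 0 0) * Hd))) (at 0)"
      unfolding g_def by (rule DERIV_cmult)
    thus "((\<lambda>\<zeta>. g (c*\<zeta>) (cnj c*\<zeta>)) has_field_derivative
        (c * (- M * (- cnj a + a * cnj s / 2) / H 0 0) + cnj c * (- M * (- a + cnj a * s / 2) / H 0 0))) (at 0)"
      by (rule DERIV_cong) (use ne in \<open>simp add: Hd_def field_simps\<close>)
  qed
  thus ?thesis by (simp add: H0 a_def s_def M_def)
qed

lemma bergman_coeff_K_IV: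
  assumes h: "hIV m Z > 0" and a: "a < m" and b: "b < m"
  shows "bergman_coeff (K_IV m) a b Z =
     - of_nat m * (((if a = b then -1 else 0) + Z a * cnj (Z b)) / of_real (hIV m Z)
        - (- Z b + cnj (Z b) * sum_sq m Z / 2) * (- cnj (Z a) + Z a * cnj (sum_sq m Z) / 2) / (of_real (hIV m Z))^2)"
proof -
  define S where "S = normsq m Z"
  define s where "s = sum_sq m Z"
  define za where "za = Z a"
  define zb where "zb = Z b"
  define d where "d = (if a = b then 1 else 0 :: complex)"
  define M where "M = (of_nat m :: complex)"
  define H where "H = (\<lambda>\<zeta> \<eta>. 1 - (of_real S - za * cnj za + (za + \<zeta>) * (cnj za + \<eta>))
     + (s - za^2 + (za + \<zeta>)^2) * (cnj s - (cnj za)^2 + (cnj za + \<eta>)^2) / 4)"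
  define Nm where "Nm = (\<lambda>\<zeta> \<eta>. - (zb + d * \<zeta>) + (cnj zb + d * \<eta>) * (s - za^2 + (za + \<zeta>)^2) / 2)"
  define g where "g = (\<lambda>\<zeta> \<eta>. - M * (Nm \<zeta> \<eta> / H \<zeta> \<eta>))"
  obtain \<delta> where dp: "\<delta> > 0" and dd: "\<And>\<zeta>. cmod \<zeta> < \<delta> \<Longrightarrow> hIV m (Z(a := Z a + \<zeta>)) > 0"
    using hIV_pos_near[OF h a] by blast
  have H0: "H 0 0 = of_real (hIV m Z)"
    using of_real_hIV_fun_upd[OF a, of Z "Z a"] by (simp add: H_def S_def s_def za_def)
  have ne: "H 0 0 \<noteq> 0" using H0 h by simp
  define GB where "GB = - M * (d * s / 2 / H 0 0 - (- zb + cnj zb * s / 2) * (- za + cnj za * s / 2) / (H 0 0)^2)"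
  have "dz a (dzbar b (\<lambda>V. complex_of_real (ln (K_IV m V)))) Z
     = - M * ((- d + za * cnj zb) / H 0 0 - (- zb + cnj zb * s / 2) * (- cnj za + za * cnj s / 2) / (H 0 0)^2)"
  proof (rule dz_dzbar_eqI(1)[OF dp, where g=g and gb=GB])
    fix \<zeta> :: complex assume zz: "cmod \<zeta> < \<delta>"
    have hc: "complex_of_real (hIV m (Z(a := Z a + \<zeta>))) = H \<zeta> (cnj \<zeta>)"
      using of_real_hIV_fun_upd[OF a, of Z "Z a + \<zeta>"] by (simp add: H_def S_def s_def za_def)
    have sv: "sum_sq m (Z(a := Z a + \<zeta>)) = s - za^2 + (za + \<zeta>)^2"
      using sum_power2_fun_upd[OF a, of Z "Z a + \<zeta>"] by (simp add: sum_sq_def s_def za_def)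
    show "dzbar b (\<lambda>V. complex_of_real (ln (K_IV m V))) (Z(a := Z a + \<zeta>)) = g \<zeta> (cnj \<zeta>)"
      unfolding dzbar_ln_K_IV[OF dd[OF zz] b] sv hc g_def Nm_def M_def
      by (simp add: zb_def d_def za_def)
  next
    fix c :: complex assume c: "c = 1 \<or> c = \<i>"
    define Hd where "Hd = -(c*cnj za + cnj c*za) + (2*za*c*cnj s + s*2*cnj za*cnj c)/4"
    have dH: "((\<lambda>\<zeta>. H (c*\<zeta>) (cnj c*\<zeta>)) has_field_derivative Hd) (at 0)"
      unfolding H_def Hd_def by (auto intro!: derivative_eq_intros simp: algebra_simps)
    define Nd where "Nd = - d * c + d * cnj c * s / 2 + cnj zb * (2 * za * c) / 2"
    have dN: "((\<lambda>\<zeta>. Nm (c*\<zeta>) (cnj c*\<zeta>)) has_field_derivative Nd) (at 0)"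
      unfolding Nm_def Nd_def by (auto intro!: derivative_eq_intros simp: algebra_simps)
    have "((\<lambda>\<zeta>. Nm (c*\<zeta>) (cnj c*\<zeta>) / H (c*\<zeta>) (cnj c*\<zeta>)) has_field_derivative
        (Nd * H 0 0 - Nm 0 0 * Hd) / (H 0 0 * H 0 0)) (at 0)"
      using DERIV_divide[OF dN dH] ne by simp
    hence "((\<lambda>\<zeta>. g (c*\<zeta>) (cnj c*\<zeta>)) has_field_derivative (- M * ((Nd * H 0 0 - Nm 0 0 * Hd) / (H 0 0 * H 0 0)))) (at 0)"
      unfolding g_def by (rule DERIV_cmult)
    thus "((\<lambda>\<zeta>. g (c*\<zeta>) (cnj c*\<zeta>)) has_field_derivative
        (c * (- M * ((- d + za * cnj zb) / H 0 0 - (- zb + cnj zb * s / 2) * (- cnj za + za * cnj s / 2) / (H 0 0)^2)) + cnj c * GB)) (at 0)"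
      by (rule DERIV_cong) (use ne in \<open>simp add: Hd_def Nd_def GB_def Nm_def field_simps power2_eq_square\<close>)
  qed
  thus ?thesis by (simp add: bergman_coeff_def H0 M_def d_def za_def zb_def s_def)
qed

section \<open>Isometries given by linear fractional maps\<close>

definition lin_form :: "nat \<Rightarrow> (nat \<Rightarrow> complex) \<Rightarrow> (nat \<Rightarrow> complex) \<Rightarrow> complex" where
  "lin_form n r z = (\<Sum>k<n. r k * z k)"

lemma lin_form_fun_upd: "j < n \<Longrightarrow> lin_form n r (z(j := v)) = lin_form n r z + r j * (v - z j)"
  unfolding lin_form_def by (simp add: sum.remove[of "{..<n}" j] algebra_simps)

lemma lin_form_scale: "lin_form n r (\<lambda>k. c * u k) = c * lin_form n r u"
  unfolding lin_form_def by (simp add: sum_distrib_left algebra_simps)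

lemma double_sum_contract:
  fixes G :: "nat \<Rightarrow> nat \<Rightarrow> complex" and D :: "nat \<Rightarrow> nat \<Rightarrow> complex" and u :: "nat \<Rightarrow> complex"
  shows "(\<Sum>j<n. \<Sum>k<n. u j * cnj (u k) * (\<Sum>a<m. \<Sum>b<m. G a b * D j a * cnj (D k b)))
       = (\<Sum>a<m. \<Sum>b<m. G a b * (\<Sum>j<n. u j * D j a) * cnj (\<Sum>k<n. u k * D k b))"
proof -
  have "(\<Sum>j<n. \<Sum>k<n. u j * cnj (u k) * (\<Sum>a<m. \<Sum>b<m. G a b * D j a * cnj (D k b)))
      = (\<Sum>j<n. \<Sum>k<n. \<Sum>a<m. \<Sum>b<m. G a b * (u j * D j a) * cnj (u k * D k b))"
    by (simp add: sum_distrib_left algebra_simps)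
  also have "\<dots> = (\<Sum>j<n. \<Sum>a<m. \<Sum>k<n. \<Sum>b<m. G a b * (u j * D j a) * cnj (u k * D k b))"
    by (rule sum.cong[OF refl]) (rule sum.swap)
  also have "\<dots> = (\<Sum>a<m. \<Sum>j<n. \<Sum>k<n. \<Sum>b<m. G a b * (u j * D j a) * cnj (u k * D k b))"
    by (rule sum.swap)
  also have "\<dots> = (\<Sum>a<m. \<Sum>j<n. \<Sum>b<m. \<Sum>k<n. G a b * (u j * D j a) * cnj (u k * D k b))"
    by (intro sum.cong refl sum.swap)
  also have "\<dots> = (\<Sum>a<m. \<Sum>b<m. \<Sum>j<n. \<Sum>k<n. G a b * (u j * D j a) * cnj (u k * D k b))"
    by (intro sum.cong refl sum.swap)
  also have "\<dots> = (\<Sum>a<m. \<Sum>b<m. G a b * (\<Sum>j<n. u j * D j a) * cnj (\<Sum>k<n. u k * D k b))"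
    by (simp add: sum_distrib_left sum_distrib_right cnj_sum algebra_simps)
  finally show ?thesis .
qed

lemma double_sum_bergman_K_IV_shape:
  fixes X Y U V p q :: "nat \<Rightarrow> complex" and M ih ih2 :: complex
  shows "(\<Sum>a<m. \<Sum>b<m. (- M * (((if a = b then -1 else 0) + X a * Y b) * ih - U b * V a * ih2)) * p a * q b)
     = - M * ((- (\<Sum>a<m. p a * q a) + (\<Sum>a<m. X a * p a) * (\<Sum>b<m. Y b * q b)) * ih
              - (\<Sum>b<m. U b * q b) * (\<Sum>a<m. V a * p a) * ih2)"
proof -
  have e1: "(\<Sum>a<m. \<Sum>b<m. (if a = b then -1 else 0) * p a * q b) = - (\<Sum>a<m. p a * q a)"
  proof -
    have "(\<Sum>a<m. \<Sum>b<m. (if a = b then -1 else 0) * p a * q b) = (\<Sum>a<m. - (p a * q a))"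
    proof (rule sum.cong[OF refl])
      fix a assume "a \<in> {..<m}"
      have "(\<Sum>b<m. (if a = b then -1 else 0) * p a * q b) = (\<Sum>b<m. if b = a then - (p a * q b) else 0)"
        by (rule sum.cong) auto
      also have "\<dots> = - (p a * q a)" using \<open>a \<in> {..<m}\<close> by (simp add: sum.delta)
      finally show "(\<Sum>b<m. (if a = b then -1 else 0) * p a * q b) = - (p a * q a)" .
    qed
    thus ?thesis by (simp add: sum_negf)
  qed
  have e2: "(\<Sum>a<m. \<Sum>b<m. X a * Y b * p a * q b) = (\<Sum>a<m. X a * p a) * (\<Sum>b<m. Y b * q b)"
    by (simp add: sum_product algebra_simps)
  have e3: "(\<Sum>a<m. \<Sum>b<m. U b * V a * p a * q b) = (\<Sum>b<m. U b * q b) * (\<Sum>a<m. V a * p a)"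
    by (simp add: sum_product algebra_simps) (rule sum.swap)
  have "(\<Sum>a<m. \<Sum>b<m. (- M * (((if a = b then -1 else 0) + X a * Y b) * ih - U b * V a * ih2)) * p a * q b)
     = (\<Sum>a<m. \<Sum>b<m. (- M * ih) * ((if a = b then -1 else 0) * p a * q b) + (- M * ih) * (X a * Y b * p a * q b)
          + (M * ih2) * (U b * V a * p a * q b))"
    by (intro sum.cong refl) (simp add: algebra_simps)
  also have "\<dots> = (- M * ih) * (\<Sum>a<m. \<Sum>b<m. (if a = b then -1 else 0) * p a * q b)
       + (- M * ih) * (\<Sum>a<m. \<Sum>b<m. X a * Y b * p a * q b) + (M * ih2) * (\<Sum>a<m. \<Sum>b<m. U b * V a * p a * q b)"
    by (simp only: sum.distrib sum_distrib_left)
  also have "\<dots> = - M * ((- (\<Sum>a<m. p a * q a) + (\<Sum>a<m. X a * p a) * (\<Sum>b<m. Y b * q b)) * ih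
              - (\<Sum>b<m. U b * q b) * (\<Sum>a<m. V a * p a) * ih2)"
    unfolding e1 e2 e3 by (simp add: algebra_simps)
  finally show ?thesis .
qed

lemma bergman_K_IV_line_algebra:
  fixes R cR sg csg P x M h :: complex
  assumes R: "R \<noteq> 0" "cR \<noteq> 0" and hh: "h = 1 - x^2 * P / (R*cR) + x^4 * sg * csg / (4 * (R*cR)^2)" and h0: "h \<noteq> 0"
  shows "- M * ((- (P / (R*cR)^2) + (x * sg / R^3) * (x * csg / cR^3)) * inverse h
        - (- x * P / (R * cR^2) + (x^2 * sg / R^2) / 2 * (x * csg / cR^3))
          * (- x * P / (cR * R^2) + (x^2 * csg / cR^2) / 2 * (x * sg / R^3)) * inverse (h^2))
       = M * (P * (R*cR)^2 - x^2 * (sg*csg) * (R*cR) + x^4 * P * (sg*csg) / 4) / ((R*cR)^2 * h)^2"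
proof -
  define W where "W = R * cR"
  define S where "S = sg * csg"
  have W0: "W \<noteq> 0" using R by (simp add: W_def)
  have s1: "(x * sg / R^3) * (x * csg / cR^3) = x^2 * S / W^3"
    by (simp add: W_def S_def power_mult_distrib power2_eq_square)
  have s2: "(- x * P / (R * cR^2) + (x^2 * sg / R^2) / 2 * (x * csg / cR^3))
          * (- x * P / (cR * R^2) + (x^2 * csg / cR^2) / 2 * (x * sg / R^3))
        = x^2 * (P - x^2 * S / (2 * W))^2 / W^3"
  proof -
    have a: "- x * P / (R * cR^2) + (x^2 * sg / R^2) / 2 * (x * csg / cR^3) = - x / (R * cR^2) * (P - x^2 * S / (2 * W))"
      using R by (simp add: W_def S_def field_simps power2_eq_square power3_eq_cube)
    have b: "- x * P / (cR * R^2) + (x^2 * csg / cR^2) / 2 * (x * sg / R^3) = - x / (cR * R^2) * (P - x^2 * S / (2 * W))"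
      using R by (simp add: W_def S_def field_simps power2_eq_square power3_eq_cube)
    show ?thesis unfolding a b using R by (simp add: W_def field_simps power2_eq_square power3_eq_cube)
  qed
  have hW: "h = 1 - x^2 * P / W + x^4 * S / (4 * W^2)" by (simp add: hh W_def S_def mult.assoc)
  have fin: "- M * ((- (P / W^2) + x^2 * S / W^3) * inverse h - x^2 * (P - x^2 * S / (2 * W))^2 / W^3 * inverse (h^2))
      = M * (P * W^2 - x^2 * S * W + x^4 * P * S / 4) / (W^2 * h)^2"
  proof -
    define N where "N = W^2 - x^2 * P * W + x^4 * S / 4"
    have hN: "h = N / W^2" unfolding hW N_def using W0 by (simp add: field_simps power2_eq_square)
    have N0: "N \<noteq> 0" using h0 W0 hN by auto
    have ih: "inverse h = W^2 / N" "inverse (h^2) = W^4 / N^2" unfolding hN using W0 N0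
      by (simp_all add: field_simps power2_eq_square power4_eq_xxxx)
    have num: "(P - x^2 * S / W) * N + x^2 * W * (P - x^2 * S / (2 * W))^2 = P * W^2 - x^2 * S * W + x^4 * P * S / 4"
      unfolding N_def using W0 by (simp add: field_simps) algebra
    have "- M * ((- (P / W^2) + x^2 * S / W^3) * inverse h - x^2 * (P - x^2 * S / (2 * W))^2 / W^3 * inverse (h^2))
        = M * ((P - x^2 * S / W) * N + x^2 * W * (P - x^2 * S / (2 * W))^2) / N^2"
      unfolding ih using W0 N0 by (simp add: field_simps power2_eq_square power3_eq_cube power4_eq_xxxx)
    also have "\<dots> = M * (P * W^2 - x^2 * S * W + x^4 * P * S / 4) / N^2" unfolding num ..
    also have "N^2 = (W^2 * h)^2" unfolding hN using W0 by simp
    finally show ?thesis .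
  qed
  show ?thesis using fin unfolding s1 s2 W_def S_def by simp
qed

lemma sum_sq_line: "sum_sq m (\<lambda>a. of_real x * v a / R) = of_real x^2 * (\<Sum>a<m. (v a)^2) / R^2"
  unfolding sum_sq_def by (simp add: power_divide power_mult_distrib sum_divide_distrib sum_distrib_left)

lemma of_real_hIV_line:
  fixes v :: "nat \<Rightarrow> complex" and R :: complex and x :: real and m :: nat
  defines "P \<equiv> (\<Sum>a<m. v a * cnj (v a))"
  defines "sg \<equiv> (\<Sum>a<m. (v a)^2)"
  assumes R: "R \<noteq> 0"
  shows "complex_of_real (hIV m (\<lambda>a. of_real x * v a / R))
    = 1 - of_real x^2 * P / (R * cnj R) + of_real x^4 * sg * cnj sg / (4 * (R * cnj R)^2)"
proof -
  define T where "T = (\<lambda>a. of_real x * v a / R)"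
  define X where "X = complex_of_real x"
  have cX: "cnj X = X" by (simp add: X_def)
  have nT: "complex_of_real (normsq m T) = X^2 * P / (R * cnj R)"
  proof -
    have "complex_of_real (normsq m T) = (\<Sum>a<m. T a * cnj (T a))"
      unfolding normsq_def of_real_sum by (intro sum.cong refl) (rule complex_norm_square)
    also have "\<dots> = (\<Sum>a<m. X^2 * (v a * cnj (v a)) / (R * cnj R))"
      by (intro sum.cong refl) (simp add: T_def X_def power2_eq_square)
    also have "\<dots> = X^2 * P / (R * cnj R)"
      by (simp add: P_def sum_divide_distrib sum_distrib_left)
    finally show ?thesis .
  qed
  have sT: "sum_sq m T = X^2 * sg / R^2"
    unfolding T_def sum_sq_line sg_def X_def ..
  have "complex_of_real (hIV m T) = 1 - of_real (normsq m T) + sum_sq m T * cnj (sum_sq m T) / 4"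
    unfolding hIV_def by (simp add: of_real_cmod_power2 sum_sq_def)
  also have "\<dots> = 1 - X^2 * P / (R * cnj R) + X^4 * sg * cnj sg / (4 * (R * cnj R)^2)"
    unfolding nT sT by (simp add: cX power2_eq_square power4_eq_xxxx field_simps)
  finally show ?thesis by (simp add: T_def X_def)
qed

lemma line_contraction_sums:
  fixes v :: "nat \<Rightarrow> complex" and R :: complex and x :: real and m :: nat
  defines "T \<equiv> (\<lambda>a. of_real x * v a / R)"
  defines "P \<equiv> (\<Sum>a<m. v a * cnj (v a))"
  defines "sg \<equiv> (\<Sum>a<m. (v a)^2)"
  shows "(\<Sum>a<m. (v a / R^2) * cnj (v a / R^2)) = P / (R * cnj R)^2"
    and "(\<Sum>a<m. T a * (v a / R^2)) = of_real x * sg / R^3"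
    and "(\<Sum>b<m. cnj (T b) * cnj (v b / R^2)) = of_real x * cnj sg / (cnj R)^3"
    and "(\<Sum>b<m. T b * cnj (v b / R^2)) = of_real x * P / (R * (cnj R)^2)"
    and "(\<Sum>a<m. cnj (T a) * (v a / R^2)) = of_real x * P / (cnj R * R^2)"
proof -
  show "(\<Sum>a<m. (v a / R^2) * cnj (v a / R^2)) = P / (R * cnj R)^2"
    unfolding P_def by (simp add: sum_divide_distrib power_mult_distrib field_simps)
  show s2: "(\<Sum>a<m. T a * (v a / R^2)) = of_real x * sg / R^3"
    unfolding sg_def T_def by (simp add: sum_divide_distrib sum_distrib_left power2_eq_square power3_eq_cube field_simps)
  have "(\<Sum>b<m. cnj (T b) * cnj (v b / R^2)) = cnj (\<Sum>a<m. T a * (v a / R^2))" by (simp add: cnj_sum)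
  thus "(\<Sum>b<m. cnj (T b) * cnj (v b / R^2)) = of_real x * cnj sg / (cnj R)^3" unfolding s2 by simp
  show s4: "(\<Sum>b<m. T b * cnj (v b / R^2)) = of_real x * P / (R * (cnj R)^2)"
    unfolding P_def T_def by (simp add: sum_divide_distrib sum_distrib_left power2_eq_square field_simps)
  have "(\<Sum>a<m. cnj (T a) * (v a / R^2)) = cnj (\<Sum>b<m. T b * cnj (v b / R^2))" by (simp add: cnj_sum)
  thus "(\<Sum>a<m. cnj (T a) * (v a / R^2)) = of_real x * P / (cnj R * R^2)"
    unfolding s4 by (simp add: P_def cnj_sum mult.commute)
qed

lemma bergman_K_IV_contracted_line:
  fixes v :: "nat \<Rightarrow> complex" and R :: complex and x :: real and m :: nat
  defines "T \<equiv> (\<lambda>a. of_real x * v a / R)"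
  defines "P \<equiv> (\<Sum>a<m. v a * cnj (v a))"
  defines "sg \<equiv> (\<Sum>a<m. (v a)^2)"
  assumes R: "R \<noteq> 0" and hpos: "hIV m T > 0"
  shows "(\<Sum>a<m. \<Sum>b<m. (- of_nat m * (((if a = b then -1 else 0) + T a * cnj (T b)) / of_real (hIV m T)
        - (- T b + cnj (T b) * sum_sq m T / 2) * (- cnj (T a) + T a * cnj (sum_sq m T) / 2) / (of_real (hIV m T))^2))
          * (v a / R^2) * cnj (v b / R^2))
      = of_nat m * (P * (R*cnj R)^2 - of_real x^2 * (sg * cnj sg) * (R * cnj R) + of_real x^4 * P * (sg * cnj sg) / 4)
          / ((R * cnj R)^2 * of_real (hIV m T))^2"
proof -
  define X where "X = complex_of_real x"
  have cX: "cnj X = X" by (simp add: X_def)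
  have sT: "sum_sq m T = X^2 * sg / R^2"
    unfolding T_def sum_sq_line sg_def X_def ..
  have hT: "complex_of_real (hIV m T) = 1 - X^2 * P / (R * cnj R) + X^4 * sg * cnj sg / (4 * (R * cnj R)^2)"
    unfolding T_def X_def P_def sg_def by (rule of_real_hIV_line[OF R])
  have h0: "complex_of_real (hIV m T) \<noteq> 0" using hpos by simp
  have sums: "(\<Sum>a<m. (v a / R^2) * cnj (v a / R^2)) = P / (R * cnj R)^2"
    "(\<Sum>a<m. T a * (v a / R^2)) = X * sg / R^3"
    "(\<Sum>b<m. cnj (T b) * cnj (v b / R^2)) = X * cnj sg / (cnj R)^3"
    "(\<Sum>b<m. T b * cnj (v b / R^2)) = X * P / (R * (cnj R)^2)"
    "(\<Sum>a<m. cnj (T a) * (v a / R^2)) = X * P / (cnj R * R^2)"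
    unfolding T_def P_def sg_def X_def by (rule line_contraction_sums)+
  define U where "U = (\<lambda>b. - T b + cnj (T b) * sum_sq m T / 2)"
  define V where "V = (\<lambda>a. - cnj (T a) + T a * cnj (sum_sq m T) / 2)"
  have "(\<Sum>b<m. U b * cnj (v b / R^2)) = (\<Sum>b<m. - (T b * cnj (v b / R^2)) + sum_sq m T / 2 * (cnj (T b) * cnj (v b / R^2)))"
    unfolding U_def by (intro sum.cong refl) (simp add: algebra_simps)
  also have "\<dots> = - (\<Sum>b<m. T b * cnj (v b / R^2)) + sum_sq m T / 2 * (\<Sum>b<m. cnj (T b) * cnj (v b / R^2))"
    by (simp only: sum.distrib sum_negf sum_distrib_left)
  also have "\<dots> = - X * P / (R * (cnj R)^2) + (X^2 * sg / R^2) / 2 * (X * cnj sg / (cnj R)^3)"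
    unfolding sums sT by simp
  finally have sU: "(\<Sum>b<m. U b * cnj (v b / R^2)) = \<dots>" .
  have "(\<Sum>a<m. V a * (v a / R^2)) = (\<Sum>a<m. - (cnj (T a) * (v a / R^2)) + cnj (sum_sq m T) / 2 * (T a * (v a / R^2)))"
    unfolding V_def by (intro sum.cong refl) (simp add: algebra_simps)
  also have "\<dots> = - (\<Sum>a<m. cnj (T a) * (v a / R^2)) + cnj (sum_sq m T) / 2 * (\<Sum>a<m. T a * (v a / R^2))"
    by (simp only: sum.distrib sum_negf sum_distrib_left)
  also have "\<dots> = - X * P / (cnj R * R^2) + (X^2 * cnj sg / (cnj R)^2) / 2 * (X * sg / R^3)"
    unfolding sums sT by (simp add: cX)
  finally have sV: "(\<Sum>a<m. V a * (v a / R^2)) = \<dots>" .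
  have "(\<Sum>a<m. \<Sum>b<m. (- of_nat m * (((if a = b then -1 else 0) + T a * cnj (T b)) / of_real (hIV m T)
        - (- T b + cnj (T b) * sum_sq m T / 2) * (- cnj (T a) + T a * cnj (sum_sq m T) / 2) / (of_real (hIV m T))^2))
          * (v a / R^2) * cnj (v b / R^2))
     = - of_nat m * ((- (\<Sum>a<m. (v a / R^2) * cnj (v a / R^2)) + (\<Sum>a<m. T a * (v a / R^2)) * (\<Sum>b<m. cnj (T b) * cnj (v b / R^2))) * inverse (of_real (hIV m T))
              - (\<Sum>b<m. U b * cnj (v b / R^2)) * (\<Sum>a<m. V a * (v a / R^2)) * inverse ((of_real (hIV m T))^2))"
    unfolding U_def V_def divide_inverse[of _ "complex_of_real (hIV m T)"] divide_inverse[of _ "(complex_of_real (hIV m T))^2"]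
    by (rule double_sum_bergman_K_IV_shape)
  also have "\<dots> = of_nat m * (P * (R*cnj R)^2 - of_real x^2 * (sg * cnj sg) * (R * cnj R) + of_real x^4 * P * (sg * cnj sg) / 4)
          / ((R * cnj R)^2 * of_real (hIV m T))^2"
    unfolding sU sV sums using bergman_K_IV_line_algebra[OF R _ hT h0, of "of_nat m"] R by (simp add: X_def)
  finally show ?thesis .
qed

lemma bergman_K_ball_contracted_ray:
  fixes u :: "nat \<Rightarrow> complex" and x :: real and n :: nat
  defines "z \<equiv> (\<lambda>k. complex_of_real x * u k)"
  defines "q \<equiv> complex_of_real (normsq n u)"
  assumes S1: "normsq n z < 1"
  shows "(\<Sum>j<n. \<Sum>k<n. u j * cnj (u k) * bergman_coeff (K_ball n) j k z)
      = of_nat (n+1) * (q / (1 - of_real x^2 * q)^2)"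
proof -
  define D where "D = 1 - of_real x^2 * q"
  have D_eq: "D = 1 - complex_of_real (normsq n z)"
    by (simp add: D_def z_def q_def normsq_scale)
  have D0: "D \<noteq> 0" using S1 unfolding D_eq
    by (metis diff_gt_0_iff_gt of_real_1 of_real_diff of_real_eq_0_iff order_less_irrefl)
  define N where "N = (of_nat (n+1) :: complex)"
  have "(\<Sum>j<n. \<Sum>k<n. u j * cnj (u k) * bergman_coeff (K_ball n) j k z)
      = (\<Sum>j<n. \<Sum>k<n. N / D * (if k = j then u j * cnj (u k) else 0) + N / D^2 * ((u j * cnj (z j)) * (cnj (u k) * z k)))"
    by (intro sum.cong refl) (use bergman_coeff_K_ball[OF S1] in \<open>auto simp: D_eq N_def algebra_simps\<close>)
  also have "\<dots> = N / D * (\<Sum>j<n. \<Sum>k<n. (if k = j then u j * cnj (u k) else 0)) + N / D^2 * (\<Sum>j<n. \<Sum>k<n. (u j * cnj (z j)) * (cnj (u k) * z k))"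
    by (simp only: sum.distrib sum_distrib_left)
  also have "(\<Sum>j<n. \<Sum>k<n. (if k = j then u j * cnj (u k) else 0)) = q"
    unfolding q_def normsq_def by (simp add: of_real_cmod_power2)
  also have "(\<Sum>j<n. \<Sum>k<n. (u j * cnj (z j)) * (cnj (u k) * z k)) = (of_real x * q) * (of_real x * q)"
    unfolding sum_product[symmetric] q_def normsq_def z_def
    by (simp add: of_real_cmod_power2 sum_distrib_left algebra_simps)
  also have "(of_real x * q) * (of_real x * q) = (1 - D) * q"
    by (simp add: D_def power2_eq_square algebra_simps)
  also have "N / D * q + N / D^2 * ((1 - D) * q) = N * (q / D^2)"
    using D0 by (simp add: field_simps power2_eq_square)
  finally show ?thesis by (simp add: N_def D_def)
qed

locale lin_frac_map =
  fixes n m :: nat and F :: "(nat \<Rightarrow> complex) \<Rightarrow> (nat \<Rightarrow> complex)"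
    and r :: "nat \<Rightarrow> complex" and A :: "nat \<Rightarrow> nat \<Rightarrow> complex"
  assumes lin_frac: "\<And>z a. z \<in> unit_ball n \<Longrightarrow> a < m \<Longrightarrow>
      (1 + lin_form n r z) * F z a = lin_form n (\<lambda>k. A k a) z"
begin

lemma dz_F:
  assumes zb: "z \<in> unit_ball n" and Rz: "1 + lin_form n r z \<noteq> 0" and j: "j < n" and a: "a < m"
  shows "dz j (\<lambda>w. F w a) z = (A j a * (1 + lin_form n r z) - lin_form n (\<lambda>k. A k a) z * r j) / (1 + lin_form n r z)^2"
proof -
  define R0 where "R0 = 1 + lin_form n r z"
  define P0 where "P0 = lin_form n (\<lambda>k. A k a) z"
  define g where "g = (\<lambda>\<zeta> (\<eta>::complex). (P0 + A j a * \<zeta>) / (R0 + r j * \<zeta>))"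
  have S1: "normsq n z < 1" and hi: "\<forall>k\<ge>n. z k = 0" using zb by (auto simp: unit_ball_def)
  have "\<exists>\<delta>>0. \<forall>\<zeta>. cmod \<zeta> < \<delta> \<longrightarrow> min (1 - (normsq n z - (cmod (z j))^2 + (cmod (z j + \<zeta>))^2)) (cmod (R0 + r j * \<zeta>)) > 0"
    by (rule pos_near_0) (use S1 Rz in \<open>auto intro!: continuous_intros simp: R0_def\<close>)
  then obtain \<delta> where dp: "\<delta> > 0" and dd: "\<And>\<zeta>. cmod \<zeta> < \<delta> \<Longrightarrow> min (1 - (normsq n z - (cmod (z j))^2 + (cmod (z j + \<zeta>))^2)) (cmod (R0 + r j * \<zeta>)) > 0"
    by blast
  have "dz j (\<lambda>w. F w a) z = (A j a * R0 - P0 * r j) / R0^2"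
  proof (rule dz_dzbar_eqI(1)[OF dp, where g=g and gb=0])
    fix \<zeta> :: complex assume zz: "cmod \<zeta> < \<delta>"
    have inb: "z(j := z j + \<zeta>) \<in> unit_ball n"
      using dd[OF zz] normsq_fun_upd[OF j, of z "z j + \<zeta>"] hi j by (auto simp: unit_ball_def)
    have nz: "R0 + r j * \<zeta> \<noteq> 0" using dd[OF zz] by auto
    have "(R0 + r j * \<zeta>) * F (z(j := z j + \<zeta>)) a = P0 + A j a * \<zeta>"
      using lin_frac[OF inb a] by (simp add: lin_form_fun_upd[OF j] R0_def P0_def add.assoc)
    thus "F (z(j := z j + \<zeta>)) a = g \<zeta> (cnj \<zeta>)" using nz unfolding g_def by (simp add: field_simps)
  next
    fix c :: complex assume c: "c = 1 \<or> c = \<i>"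
    have ne: "R0 \<noteq> 0" using Rz by (simp add: R0_def)
    show "((\<lambda>\<zeta>. g (c*\<zeta>) (cnj c*\<zeta>)) has_field_derivative (c * ((A j a * R0 - P0 * r j) / R0^2) + cnj c * 0)) (at 0)"
      unfolding g_def using ne
      by (auto intro!: derivative_eq_intros simp: field_simps power2_eq_square)
  qed
  thus ?thesis by (simp add: R0_def P0_def)
qed

lemma F_ray:
  assumes zb: "(\<lambda>k. complex_of_real x * u k) \<in> unit_ball n"
    and R0: "1 + complex_of_real x * lin_form n r u \<noteq> 0" and a: "a < m"
  shows "F (\<lambda>k. complex_of_real x * u k) a
      = of_real x * lin_form n (\<lambda>k. A k a) u / (1 + complex_of_real x * lin_form n r u)"
  using lin_frac[OF zb a] R0 by (simp add: lin_form_scale field_simps)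

lemma dz_F_ray_contracted:
  assumes zb: "(\<lambda>k. complex_of_real x * u k) \<in> unit_ball n"
    and R0: "1 + complex_of_real x * lin_form n r u \<noteq> 0" and a: "a < m"
  shows "(\<Sum>j<n. u j * dz j (\<lambda>w. F w a) (\<lambda>k. complex_of_real x * u k))
      = lin_form n (\<lambda>k. A k a) u / (1 + complex_of_real x * lin_form n r u)^2"
proof -
  define R where "R = 1 + complex_of_real x * lin_form n r u"
  have Rz: "1 + lin_form n r (\<lambda>k. complex_of_real x * u k) = R"
    by (simp add: R_def lin_form_scale)
  define L where "L = lin_form n (\<lambda>k. A k a) u"
  have "(\<Sum>j<n. u j * dz j (\<lambda>w. F w a) (\<lambda>k. complex_of_real x * u k))
      = (\<Sum>j<n. u j * ((A j a * R - of_real x * L * r j) / R^2))"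
    by (intro sum.cong refl) (use dz_F[OF zb] Rz R0 a in \<open>auto simp: R_def L_def lin_form_scale\<close>)
  also have "\<dots> = ((\<Sum>j<n. A j a * u j) * R - of_real x * L * (\<Sum>j<n. r j * u j)) / R^2"
    by (simp add: sum_divide_distrib[symmetric] sum_distrib_left sum_distrib_right sum_subtractf algebra_simps)
  also have "\<dots> = (L * R - of_real x * L * lin_form n r u) / R^2" by (simp add: L_def lin_form_def)
  also have "\<dots> = L / R^2" by (simp add: R_def algebra_simps)
  finally show ?thesis by (simp add: R_def L_def)
qed

end

locale lin_frac_isometry = lin_frac_map +
  fixes c :: real
  assumes maps_to: "\<And>z. z \<in> unit_ball n \<Longrightarrow> F z \<in> typeIV m"
    and pullback_eq: "\<And>z j k. z \<in> unit_ball n \<Longrightarrow> j < n \<Longrightarrow> k < n \<Longrightarrow>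
      pullback_coeff m (bergman_coeff (K_IV m)) F j k z = complex_of_real c * bergman_coeff (K_ball n) j k z"
    and c_pos: "c > 0"
begin

lemma hIV_ray_pos:
  assumes zb: "(\<lambda>k. complex_of_real x * u k) \<in> unit_ball n"
    and R0: "1 + complex_of_real x * lin_form n r u \<noteq> 0"
  shows "hIV m (\<lambda>a. of_real x * lin_form n (\<lambda>k. A k a) u / (1 + complex_of_real x * lin_form n r u)) > 0"
proof -
  have "hIV m (F (\<lambda>k. complex_of_real x * u k)) > 0"
    using maps_to[OF zb] by (simp add: typeIV_def)
  thus ?thesis by (subst (asm) hIV_cong[OF F_ray[OF zb R0]])
qed

end

context lin_frac_isometry
begin

text \<open>The isometry equation on the line through u, contracted with u and its conjugate.\<close>

lemma line_identity:
  fixes u :: "nat \<Rightarrow> complex" and x :: real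
  assumes zb: "(\<lambda>k. complex_of_real x * u k) \<in> unit_ball n"
    and R0: "1 + complex_of_real x * lin_form n r u \<noteq> 0"
  defines "R \<equiv> 1 + complex_of_real x * lin_form n r u"
  defines "v \<equiv> (\<lambda>a. lin_form n (\<lambda>k. A k a) u)"
  defines "P \<equiv> (\<Sum>a<m. v a * cnj (v a))"
  defines "sg \<equiv> (\<Sum>a<m. (v a)^2)"
  defines "q \<equiv> complex_of_real (normsq n u)"
  shows "of_nat m * (P * (R*cnj R)^2 - of_real x^2 * (sg * cnj sg) * (R * cnj R) + of_real x^4 * P * (sg * cnj sg) / 4)
          / ((R * cnj R)^2 * of_real (hIV m (\<lambda>a. of_real x * v a / R)))^2
        = of_real c * (of_nat (n+1) * (q / (1 - of_real x^2 * q)^2))"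
proof -
  define z where "z = (\<lambda>k. complex_of_real x * u k)"
  define T where "T = (\<lambda>a. of_real x * v a / R)"
  have R0': "R \<noteq> 0" using R0 by (simp add: R_def)
  have FzT: "F z a = T a" if "a < m" for a
    using F_ray[OF zb R0 that] by (simp add: z_def T_def v_def R_def)
  have hT: "hIV m (F z) = hIV m T" by (rule hIV_cong) (simp add: FzT)
  have sT: "sum_sq m (F z) = sum_sq m T" by (rule sum_sq_cong) (simp add: FzT)
  have hpos: "hIV m T > 0" using hIV_ray_pos[OF zb R0] by (simp add: T_def v_def R_def)
  have Du: "(\<Sum>j<n. u j * dz j (\<lambda>w. F w a) z) = v a / R^2" if "a < m" for a
    using dz_F_ray_contracted[OF zb R0 that] by (simp add: z_def v_def R_def)
  have "of_real c * (\<Sum>j<n. \<Sum>k<n. u j * cnj (u k) * bergman_coeff (K_ball n) j k z)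
      = (\<Sum>j<n. \<Sum>k<n. u j * cnj (u k) * pullback_coeff m (bergman_coeff (K_IV m)) F j k z)"
    using pullback_eq zb by (simp add: z_def sum_distrib_left algebra_simps)
  also have "\<dots> = (\<Sum>a<m. \<Sum>b<m. (- of_nat m * (((if a = b then -1 else 0) + T a * cnj (T b)) / of_real (hIV m T)
        - (- T b + cnj (T b) * sum_sq m T / 2) * (- cnj (T a) + T a * cnj (sum_sq m T) / 2) / (of_real (hIV m T))^2))
          * (v a / R^2) * cnj (v b / R^2))"
    unfolding pullback_coeff_def double_sum_contract
    by (intro sum.cong refl) (use bergman_coeff_K_IV[of m "F z"] hpos hT sT Du FzT in auto)
  also have "\<dots> = of_nat m * (P * (R*cnj R)^2 - of_real x^2 * (sg * cnj sg) * (R * cnj R) + of_real x^4 * P * (sg * cnj sg) / 4)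
          / ((R * cnj R)^2 * of_real (hIV m T))^2"
    using bergman_K_IV_contracted_line[OF R0' hpos[unfolded T_def]] by (simp add: T_def P_def sg_def)
  finally show ?thesis
    using bergman_K_ball_contracted_ray[where x=x and u=u and n=n] zb by (simp add: T_def z_def q_def unit_ball_def)
qed

end

lemma cmod_1_plus_real_mult_square: "(cmod (1 + complex_of_real x * \<rho>))^2 = 1 + 2 * Re \<rho> * x + (cmod \<rho>)^2 * x^2"
proof -
  have a: "(cmod (1 + complex_of_real x * \<rho>))^2 = (1 + x * Re \<rho>)^2 + (x * Im \<rho>)^2"
    unfolding cmod_power2 by simp
  have b: "(cmod \<rho>)^2 = (Re \<rho>)^2 + (Im \<rho>)^2" by (rule cmod_power2)
  show ?thesis unfolding a b by (simp add: power2_eq_square algebra_simps)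
qed

context lin_frac_isometry
begin

lemma line_identity_real:
  fixes u :: "nat \<Rightarrow> complex" and x :: real
  assumes zb: "(\<lambda>k. complex_of_real x * u k) \<in> unit_ball n"
    and R0: "1 + complex_of_real x * lin_form n r u \<noteq> 0"
  defines "\<rho> \<equiv> lin_form n r u"
  defines "v \<equiv> (\<lambda>a. lin_form n (\<lambda>k. A k a) u)"
  defines "p \<equiv> (\<Sum>a<m. (cmod (v a))^2)"
  defines "s \<equiv> (cmod (\<Sum>a<m. (v a)^2))^2"
  defines "q \<equiv> normsq n u"
  defines "w \<equiv> 1 + (2 * Re \<rho>) * x + (cmod \<rho>)^2 * x^2"
  shows "real m * (p * w^2 - x^2 * s * w + x^4 * p * s / 4) * (1 - x^2 * q)^2
      = (c * real (n+1)) * q * (w^2 - x^2 * p * w + x^4 * s / 4)^2"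
proof -
  define R where "R = 1 + complex_of_real x * \<rho>"
  define T where "T = (\<lambda>a. of_real x * v a / R)"
  define h where "h = hIV m T"
  have hpos: "h > 0" using hIV_ray_pos[OF zb R0] by (simp add: h_def T_def R_def v_def \<rho>_def)
  have W: "R * cnj R = of_real w"
    using complex_norm_square[of R] cmod_1_plus_real_mult_square[of x \<rho>] by (simp add: R_def w_def)
  have wpos: "w > 0" using R0 cmod_1_plus_real_mult_square[of x \<rho>] unfolding w_def \<rho>_def
    by (metis zero_less_norm_iff zero_less_power)
  have Pc: "(\<Sum>a<m. v a * cnj (v a)) = of_real p" unfolding p_def by (simp add: of_real_cmod_power2)
  have Sc: "(\<Sum>a<m. (v a)^2) * cnj (\<Sum>a<m. (v a)^2) = of_real s" unfolding s_def by (simp add: of_real_cmod_power2)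
  have hc: "complex_of_real h = 1 - of_real x^2 * of_real p / of_real w + of_real x^4 * of_real s / (4 * (of_real w)^2)"
    using of_real_hIV_line[where R=R and v=v and x=x and m=m] R0
    unfolding h_def T_def W Pc Sc[symmetric] by (simp add: mult.assoc R_def \<rho>_def)
  define N where "N = w^2 - x^2 * p * w + x^4 * s / 4"
  have hN: "w^2 * h = N"
  proof -
    have "complex_of_real (w^2 * h) = of_real N"
      using wpos by (simp add: hc N_def field_simps power2_eq_square)
    thus ?thesis by (simp only: of_real_eq_iff)
  qed
  have Npos: "N > 0" using hN wpos hpos by (metis zero_less_mult_iff zero_less_power)
  have L: "of_nat m * ((\<Sum>a<m. v a * cnj (v a)) * (R*cnj R)^2
        - of_real x^2 * ((\<Sum>a<m. (v a)^2) * cnj (\<Sum>a<m. (v a)^2)) * (R * cnj R)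
        + of_real x^4 * (\<Sum>a<m. v a * cnj (v a)) * ((\<Sum>a<m. (v a)^2) * cnj (\<Sum>a<m. (v a)^2)) / 4)
          / ((R * cnj R)^2 * of_real h)^2
      = of_real c * (of_nat (n+1) * (complex_of_real q / (1 - of_real x^2 * complex_of_real q)^2))"
    unfolding h_def T_def R_def v_def \<rho>_def q_def by (rule line_identity[OF zb R0])
  have hN': "(complex_of_real w)^2 * complex_of_real h = complex_of_real N"
    using hN by (metis of_real_mult of_real_power)
  have "complex_of_real (real m * (p * w^2 - x^2 * s * w + x^4 * p * s / 4) / N^2)
      = complex_of_real (c * (real (n+1) * (q / (1 - x^2 * q)^2)))"
    using L unfolding W Pc Sc hN' by simp
  hence eq: "real m * (p * w^2 - x^2 * s * w + x^4 * p * s / 4) / N^2 = c * (real (n+1) * (q / (1 - x^2 * q)^2))"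
    by (simp only: of_real_eq_iff)
  have "x^2 * q < 1" using zb normsq_scale[of n x u] by (simp add: unit_ball_def q_def)
  thus ?thesis using eq Npos by (simp add: N_def field_simps)
qed

end

lemma poly_eq_0_if_vanishing_near_0:
  fixes D :: "real poly"
  assumes e: "\<epsilon> > 0" and z: "\<And>x. \<bar>x\<bar> < \<epsilon> \<Longrightarrow> poly D x = 0"
  shows "D = 0"
proof (rule ccontr)
  assume "D \<noteq> 0"
  hence "finite {x. poly D x = 0}" by (rule poly_roots_finite)
  moreover have "{-\<epsilon><..<\<epsilon>} \<subseteq> {x. poly D x = 0}" using z by auto
  ultimately have "finite {-\<epsilon><..<\<epsilon>}" by (rule finite_subset[rotated])
  thus False using e infinite_Ioo[of "-\<epsilon>" \<epsilon>] by simp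
qed

lemma low_coeffs_eq_of_eq_near_0:
  fixes M C p q s b c \<epsilon> :: real
  assumes e: "\<epsilon> > 0"
    and eq: "\<And>x. \<bar>x\<bar> < \<epsilon> \<Longrightarrow>
      M * (p * (1 + b*x + c*x^2)^2 - x^2 * s * (1 + b*x + c*x^2) + x^4 * p * s / 4) * (1 - x^2 * q)^2
      = C * q * ((1 + b*x + c*x^2)^2 - x^2 * p * (1 + b*x + c*x^2) + x^4 * s / 4)^2"
  shows "M * p = C * q" "2 * M * p * b = 4 * C * q * b"
        "M * (p * (b^2 + 2*c) - s - 2*p*q) = C * q * (6*b^2 + 4*c - 2*p)"
proof -
  define Wp where "Wp = [:1, b, c:]"
  define X2 where "X2 = [:0, 0, 1::real:]"
  define L where "L = smult M ((smult p (Wp*Wp) - smult s (X2*Wp) + smult (p* s/4) (X2*X2)) * ([:1, 0, -q:] * [:1, 0, -q:]))"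
  define Np where "Np = Wp*Wp - smult p (X2 * Wp) + smult (s/4) (X2*X2)"
  define R where "R = smult (C*q) (Np * Np)"
  have "L - R = 0"
  proof (rule poly_eq_0_if_vanishing_near_0[OF e])
    fix x :: real assume xe: "\<bar>x\<bar> < \<epsilon>"
    have e1: "poly L x = M * (p * (1 + b*x + c*x^2)^2 - x^2 * s * (1 + b*x + c*x^2) + x^4 * p * s / 4) * (1 - x^2 * q)^2"
      unfolding L_def Wp_def X2_def
      apply (simp only: poly_smult poly_mult poly_add poly_diff poly_pCons poly_0)
      apply (simp add: power2_eq_square power4_eq_xxxx)
      apply (simp add: algebra_simps)
      done
    have e2: "poly R x = C * q * ((1 + b*x + c*x^2)^2 - x^2 * p * (1 + b*x + c*x^2) + x^4 * s / 4)^2"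
      unfolding R_def Np_def Wp_def X2_def
      apply (simp only: poly_smult poly_mult poly_add poly_diff poly_pCons poly_0)
      apply (simp add: power2_eq_square power4_eq_xxxx)
      apply (simp add: algebra_simps)
      done
    show "poly (L - R) x = 0" unfolding poly_diff e1 e2 eq[OF xe] by simp
  qed
  hence "L = R" by simp
  hence coeff_eq: "coeff L i = coeff R i" for i by simp
  have cs: "coeff L 0 = M * p" "coeff L 1 = 2 * M * p * b" "coeff L 2 = M * (p * (b^2 + 2*c) - s - 2*p*q)"
      "coeff R 0 = C * q" "coeff R 1 = 4 * C * q * b" "coeff R 2 = C * q * (6*b^2 + 4*c - 2*p)"
    unfolding L_def R_def Np_def Wp_def X2_def
    by (simp_all del: mult_pCons_left mult_pCons_right add: coeff_mult atMost_Suc numeral_2_eq_2)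
  show "M * p = C * q" using coeff_eq[of 0] cs by simp
  show "2 * M * p * b = 4 * C * q * b" using coeff_eq[of 1] cs by simp
  show "M * (p * (b^2 + 2*c) - s - 2*p*q) = C * q * (6*b^2 + 4*c - 2*p)" using coeff_eq[of 2] cs by simp
qed

context lin_frac_isometry
begin

lemma line_identity_near_0:
  fixes u :: "nat \<Rightarrow> complex"
  assumes u0: "\<forall>k\<ge>n. u k = 0"
  defines "\<rho> \<equiv> lin_form n r u"
  defines "v \<equiv> (\<lambda>a. lin_form n (\<lambda>k. A k a) u)"
  defines "p \<equiv> (\<Sum>a<m. (cmod (v a))^2)"
  defines "s \<equiv> (cmod (\<Sum>a<m. (v a)^2))^2"
  defines "q \<equiv> normsq n u"
  obtains \<epsilon> where "\<epsilon> > 0" and "\<And>x. \<bar>x\<bar> < \<epsilon> \<Longrightarrow>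
      real m * (p * (1 + (2 * Re \<rho>) * x + (cmod \<rho>)^2 * x^2)^2 - x^2 * s * (1 + (2 * Re \<rho>) * x + (cmod \<rho>)^2 * x^2) + x^4 * p * s / 4) * (1 - x^2 * q)^2
      = (c * real (n+1)) * q * ((1 + (2 * Re \<rho>) * x + (cmod \<rho>)^2 * x^2)^2 - x^2 * p * (1 + (2 * Re \<rho>) * x + (cmod \<rho>)^2 * x^2) + x^4 * s / 4)^2"
proof
  define \<epsilon> where "\<epsilon> = 1 / (1 + q + cmod \<rho>)"
  have q0: "q \<ge> 0" unfolding q_def normsq_def by (simp add: sum_nonneg)
  show "\<epsilon> > 0" using q0 by (simp add: \<epsilon>_def add_pos_nonneg)
  fix x :: real assume xe: "\<bar>x\<bar> < \<epsilon>"
  have xb: "\<bar>x\<bar> * (1 + q + cmod \<rho>) < 1" using xe q0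
    by (simp add: \<epsilon>_def field_simps add_pos_nonneg)
  have x1: "\<bar>x\<bar> < 1" using xb q0 by (smt (verit) mult_less_cancel_left2 norm_ge_zero)
  have "x^2 * q \<le> \<bar>x\<bar> * q" using x1 q0
    by (metis abs_ge_zero abs_mult_self_eq less_eq_real_def mult_left_le_one_le mult_right_mono power2_eq_square)
  also have "\<dots> \<le> \<bar>x\<bar> * (1 + q + cmod \<rho>)" by (simp add: mult_left_mono)
  finally have "x^2 * q < 1" using xb by linarith
  hence zb: "(\<lambda>k. complex_of_real x * u k) \<in> unit_ball n"
    using u0 normsq_scale[of n x u] by (simp add: unit_ball_def q_def)
  have "\<bar>x\<bar> * cmod \<rho> \<le> \<bar>x\<bar> * (1 + q + cmod \<rho>)" using q0 by (simp add: mult_left_mono)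
  hence "cmod (complex_of_real x * \<rho>) \<noteq> 1" using xb by (simp add: norm_mult)
  hence R0: "1 + complex_of_real x * lin_form n r u \<noteq> 0"
    by (metis \<rho>_def add_eq_0_iff norm_minus_cancel norm_one)
  show "real m * (p * (1 + (2 * Re \<rho>) * x + (cmod \<rho>)^2 * x^2)^2 - x^2 * s * (1 + (2 * Re \<rho>) * x + (cmod \<rho>)^2 * x^2) + x^4 * p * s / 4) * (1 - x^2 * q)^2
      = (c * real (n+1)) * q * ((1 + (2 * Re \<rho>) * x + (cmod \<rho>)^2 * x^2)^2 - x^2 * p * (1 + (2 * Re \<rho>) * x + (cmod \<rho>)^2 * x^2) + x^4 * s / 4)^2"
    using line_identity_real[OF zb R0] unfolding \<rho>_def v_def p_def s_def q_def .
qed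

text \<open>The coefficients of x^0, x^1 and x^2 in the line identity.\<close>

lemma line_invariants:
  fixes u :: "nat \<Rightarrow> complex"
  assumes u0: "\<forall>k\<ge>n. u k = 0"
  defines "\<rho> \<equiv> lin_form n r u"
  defines "v \<equiv> (\<lambda>a. lin_form n (\<lambda>k. A k a) u)"
  defines "p \<equiv> (\<Sum>a<m. (cmod (v a))^2)"
  defines "s \<equiv> (cmod (\<Sum>a<m. (v a)^2))^2"
  defines "q \<equiv> normsq n u"
  shows "real m * p = c * real (n+1) * q"
    and "q > 0 \<Longrightarrow> Re \<rho> = 0"
    and "m > 0 \<Longrightarrow> \<rho> = 0 \<Longrightarrow> s = 2 * p * (p - q)"
proof -
  obtain \<epsilon> where e: "\<epsilon> > 0" and eq: "\<And>x. \<bar>x\<bar> < \<epsilon> \<Longrightarrow>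
      real m * (p * (1 + (2 * Re \<rho>) * x + (cmod \<rho>)^2 * x^2)^2 - x^2 * s * (1 + (2 * Re \<rho>) * x + (cmod \<rho>)^2 * x^2) + x^4 * p * s / 4) * (1 - x^2 * q)^2
      = (c * real (n+1)) * q * ((1 + (2 * Re \<rho>) * x + (cmod \<rho>)^2 * x^2)^2 - x^2 * p * (1 + (2 * Re \<rho>) * x + (cmod \<rho>)^2 * x^2) + x^4 * s / 4)^2"
    using line_identity_near_0[OF u0] unfolding \<rho>_def v_def p_def s_def q_def by blast
  note coeffs = low_coeffs_eq_of_eq_near_0[OF e eq]
  show p: "real m * p = c * real (n+1) * q" using coeffs(1) by simp
  show "Re \<rho> = 0" if "q > 0"
    using coeffs(2) coeffs(1) c_pos that by auto
  show "s = 2 * p * (p - q)" if m0: "m > 0" and "\<rho> = 0"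
  proof -
    have "real m * (- s - 2*p*q) = - 2 * p * (real m * p)"
      using coeffs(3) \<open>\<rho> = 0\<close> p by (simp add: algebra_simps)
    hence "real m * s = real m * (2 * p * (p - q))" by (simp add: algebra_simps)
    thus ?thesis using m0 by simp
  qed
qed

end

definition coord_vec :: "nat \<Rightarrow> complex \<Rightarrow> nat \<Rightarrow> complex" where
  "coord_vec k \<alpha> = (\<lambda>i. if i = k then \<alpha> else 0)"

definition coord_vec2 :: "nat \<Rightarrow> nat \<Rightarrow> complex \<Rightarrow> complex \<Rightarrow> nat \<Rightarrow> complex" where
  "coord_vec2 j k \<alpha> \<beta> = (\<lambda>i. if i = j then \<alpha> else if i = k then \<beta> else 0)"

lemma coord_vec_vanishes: "k < n \<Longrightarrow> \<forall>i\<ge>n. coord_vec k \<alpha> i = 0"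
  by (simp add: coord_vec_def)

lemma lin_form_coord_vec: "k < n \<Longrightarrow> lin_form n f (coord_vec k \<alpha>) = \<alpha> * f k"
  unfolding lin_form_def coord_vec_def by (simp add: if_distrib sum.delta mult.commute cong: if_cong)

lemma normsq_coord_vec: "k < n \<Longrightarrow> normsq n (coord_vec k \<alpha>) = (cmod \<alpha>)^2"
  unfolding normsq_def coord_vec_def by (simp add: if_distrib[of "\<lambda>z. (cmod z)^2"] sum.delta cong: if_cong)

lemma coord_vec2_vanishes: "j < n \<Longrightarrow> k < n \<Longrightarrow> \<forall>i\<ge>n. coord_vec2 j k \<alpha> \<beta> i = 0"
  by (simp add: coord_vec2_def)

lemma lin_form_coord_vec2:
  assumes "j < n" "k < n" "j \<noteq> k"
  shows "lin_form n f (coord_vec2 j k \<alpha> \<beta>) = \<alpha> * f j + \<beta> * f k"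
proof -
  have "lin_form n f (coord_vec2 j k \<alpha> \<beta>) = (\<Sum>i<n. (if i = j then f j * \<alpha> else 0) + (if i = k then f k * \<beta> else 0))"
    unfolding lin_form_def coord_vec2_def using assms by (intro sum.cong refl) auto
  also have "\<dots> = \<alpha> * f j + \<beta> * f k" using assms by (simp add: sum.distrib sum.delta mult.commute)
  finally show ?thesis .
qed

lemma normsq_coord_vec2:
  assumes "j < n" "k < n" "j \<noteq> k"
  shows "normsq n (coord_vec2 j k \<alpha> \<beta>) = (cmod \<alpha>)^2 + (cmod \<beta>)^2"
proof -
  have "normsq n (coord_vec2 j k \<alpha> \<beta>) = (\<Sum>i<n. (if i = j then (cmod \<alpha>)^2 else 0) + (if i = k then (cmod \<beta>)^2 else 0))"
    unfolding normsq_def coord_vec2_def using assms by (intro sum.cong refl) auto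
  also have "\<dots> = (cmod \<alpha>)^2 + (cmod \<beta>)^2" using assms by (simp add: sum.distrib sum.delta)
  finally show ?thesis .
qed

lemma coeffs_eq_0_if_Re_lin_form_eq_0:
  assumes "\<And>u. \<forall>k\<ge>n. u k = 0 \<Longrightarrow> normsq n u > 0 \<Longrightarrow> Re (lin_form n r u) = 0" and "k < n"
  shows "r k = 0"
proof -
  have "Re (\<alpha> * r k) = 0" if "\<alpha> \<noteq> 0" for \<alpha>
    using assms(1)[OF coord_vec_vanishes[OF \<open>k < n\<close>], of \<alpha>] that
    by (simp add: lin_form_coord_vec[OF \<open>k < n\<close>] normsq_coord_vec[OF \<open>k < n\<close>])
  from this[of 1] this[of \<i>] show "r k = 0" by (simp add: complex_eq_iff)
qed

lemma exists_isotropic_pair: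
  fixes a b d :: complex
  obtains \<alpha> \<beta> where "(cmod \<alpha>)^2 + (cmod \<beta>)^2 > 0" and "\<alpha>^2 * a + 2 * \<alpha> * \<beta> * b + \<beta>^2 * d = 0"
proof (cases "a = 0")
  case True
  thus ?thesis using that[of 1 0] by simp
next
  case False
  define \<alpha> where "\<alpha> = (- b + csqrt (b^2 - a * d)) / a"
  have "a * (\<alpha>^2 * a + 2 * \<alpha> * 1 * b + 1^2 * d) = (csqrt (b^2 - a * d))^2 - b^2 + a * d"
    unfolding \<alpha>_def using False by (simp add: field_simps power2_eq_square)
  also have "\<dots> = 0" by simp
  finally have "\<alpha>^2 * a + 2 * \<alpha> * 1 * b + 1^2 * d = 0" using False by simp
  moreover have "(cmod \<alpha>)^2 + (cmod 1)^2 > 0" by (simp add: add_nonneg_pos)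
  ultimately show ?thesis using that by blast
qed

text \<open>Polarization: the Gram matrices A A^* and A A^t are determined by the values of
  the corresponding forms on the vectors e_j and e_j + e_k (and e_j + i e_k for A A^*).\<close>

lemma isotropic_rows_if_sum_sq_eq_0:
  fixes A :: "nat \<Rightarrow> nat \<Rightarrow> complex"
  assumes iso: "\<And>u. \<forall>k\<ge>n. u k = 0 \<Longrightarrow> (\<Sum>a<m. (lin_form n (\<lambda>k. A k a) u)^2) = 0"
    and j: "j < n" and k: "k < n"
  shows "(\<Sum>a<m. A j a * A k a) = 0"
proof -
  have diag: "(\<Sum>a<m. A i a * A i a) = 0" if i: "i < n" for i
    using iso[OF coord_vec_vanishes[OF i], of 1]
    by (simp add: lin_form_coord_vec[OF i] power2_eq_square)
  show ?thesis
  proof (cases "j = k")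
    case True thus ?thesis using diag[OF j] by simp
  next
    case False
    have "(\<Sum>a<m. (A j a + A k a)^2) = 0"
      using iso[OF coord_vec2_vanishes[OF j k], of 1 1] by (simp add: lin_form_coord_vec2[OF j k False])
    hence "(\<Sum>a<m. A j a * A j a) + 2 * (\<Sum>a<m. A j a * A k a) + (\<Sum>a<m. A k a * A k a) = 0"
      by (simp add: power2_eq_square algebra_simps sum.distrib sum_distrib_left)
    thus ?thesis using diag[OF j] diag[OF k] by simp
  qed
qed

lemma orthonormal_rows_if_norm_preserving:
  fixes A :: "nat \<Rightarrow> nat \<Rightarrow> complex"
  assumes isom: "\<And>u. \<forall>k\<ge>n. u k = 0 \<Longrightarrow> (\<Sum>a<m. (cmod (lin_form n (\<lambda>k. A k a) u))^2) = normsq n u"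
    and j: "j < n" and k: "k < n"
  shows "(\<Sum>a<m. A j a * cnj (A k a)) = (if j = k then 1 else 0)"
proof -
  define G where "G = (\<lambda>j k. \<Sum>a<m. A j a * cnj (A k a))"
  have isom_c: "(\<Sum>a<m. lin_form n (\<lambda>k. A k a) u * cnj (lin_form n (\<lambda>k. A k a) u)) = of_real (normsq n u)"
    if "\<forall>k\<ge>n. u k = 0" for u
    using arg_cong[OF isom[OF that], of complex_of_real] by (simp add: of_real_cmod_power2)
  have diag: "G i i = 1" if i: "i < n" for i
    using isom_c[OF coord_vec_vanishes[OF i], of 1]
    by (simp add: G_def lin_form_coord_vec[OF i] normsq_coord_vec[OF i])
  have Gc: "G k j = cnj (G j k)" unfolding G_def by (simp add: cnj_sum mult.commute)
  have pair: "2 + \<beta> * G k j + cnj \<beta> * G j k = 2" if "cmod \<beta> = 1" and jk: "j \<noteq> k" for \<beta>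
  proof -
    have "(\<Sum>a<m. (A j a + \<beta> * A k a) * cnj (A j a + \<beta> * A k a)) = of_real (1 + (cmod \<beta>)^2)"
      using isom_c[OF coord_vec2_vanishes[OF j k], of 1 \<beta>]
      by (simp add: lin_form_coord_vec2[OF j k jk] normsq_coord_vec2[OF j k jk])
    moreover have "(\<Sum>a<m. (A j a + \<beta> * A k a) * cnj (A j a + \<beta> * A k a))
        = G j j + \<beta> * cnj \<beta> * G k k + \<beta> * G k j + cnj \<beta> * G j k"
      unfolding G_def by (simp add: algebra_simps sum.distrib sum_distrib_left)
    ultimately show ?thesis
      using diag[OF j] diag[OF k] \<open>cmod \<beta> = 1\<close> complex_norm_square[of \<beta>] by simp
  qed
  show ?thesis
  proof (cases "j = k")
    case True thus ?thesis using diag[OF j] by (simp add: G_def)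
  next
    case False
    have "G j k + cnj (G j k) = 0" and "\<i> * cnj (G j k) - \<i> * G j k = 0"
      using pair[of 1, OF _ False] pair[of \<i>, OF _ False] Gc by (simp_all add: algebra_simps)
    hence "G j k = 0" by (simp add: complex_eq_iff)
    thus ?thesis using False by (simp add: G_def)
  qed
qed

context lin_frac_isometry
begin

lemma r_eq_0: "k < n \<Longrightarrow> r k = 0"
  by (rule coeffs_eq_0_if_Re_lin_form_eq_0) (use line_invariants(2) in auto)

lemma lin_form_r_eq_0: "lin_form n r u = 0"
  unfolding lin_form_def using r_eq_0 by simp

lemma image_sum_sq:
  assumes u0: "\<forall>k\<ge>n. u k = 0" and m0: "m > 0"
  defines "\<kappa> \<equiv> c * real (n+1) / real m"
  shows "(cmod (\<Sum>a<m. (lin_form n (\<lambda>k. A k a) u)^2))^2 = 2 * \<kappa> * (\<kappa> - 1) * (normsq n u)^2"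
proof -
  have "real m * (\<Sum>a<m. (cmod (lin_form n (\<lambda>k. A k a) u))^2) = real m * (\<kappa> * normsq n u)"
    using line_invariants(1)[OF u0] m0 by (simp add: \<kappa>_def)
  hence "(\<Sum>a<m. (cmod (lin_form n (\<lambda>k. A k a) u))^2) = \<kappa> * normsq n u" using m0 by simp
  thus ?thesis using line_invariants(3)[OF u0 m0 lin_form_r_eq_0]
    by (simp add: power2_eq_square algebra_simps)
qed

text \<open>Since n \<ge> 2, the quadratic form u \<mapsto> (A u)(A u)^t has a nonzero isotropic vector,
  which forces the isometry constant to be m / (n + 1).\<close>

lemma isometry_constant:
  assumes n2: "n \<ge> 2" and m0: "m > 0"
  shows "c * real (n+1) = real m"
proof -
  define \<kappa> where "\<kappa> = c * real (n+1) / real m"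
  define S where "S = (\<lambda>j k. \<Sum>a<m. A j a * A k a)"
  have n01: "0 < n" "1 < n" "(0::nat) \<noteq> 1" using n2 by auto
  obtain \<alpha> \<beta> where ab: "(cmod \<alpha>)^2 + (cmod \<beta>)^2 > 0"
    and null: "\<alpha>^2 * S 0 0 + 2 * \<alpha> * \<beta> * S 0 1 + \<beta>^2 * S 1 1 = 0"
    using exists_isotropic_pair by blast
  define u where "u = coord_vec2 0 1 \<alpha> \<beta>"
  have "(\<Sum>a<m. (lin_form n (\<lambda>k. A k a) u)^2) = \<alpha>^2 * S 0 0 + 2 * \<alpha> * \<beta> * S 0 1 + \<beta>^2 * S 1 1"
    unfolding u_def lin_form_coord_vec2[OF n01] S_def
    by (simp add: power2_eq_square algebra_simps sum.distrib sum_distrib_left)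
  moreover have "(cmod (\<Sum>a<m. (lin_form n (\<lambda>k. A k a) u)^2))^2 = 2 * \<kappa> * (\<kappa> - 1) * (normsq n u)^2"
    unfolding \<kappa>_def u_def by (rule image_sum_sq[OF coord_vec2_vanishes[OF n01(1,2)] m0])
  ultimately have "2 * \<kappa> * (\<kappa> - 1) * (normsq n u)^2 = 0" using null by simp
  moreover have "normsq n u > 0" using normsq_coord_vec2[OF n01] ab by (simp add: u_def)
  moreover have "\<kappa> > 0" using c_pos m0 by (simp add: \<kappa>_def)
  ultimately have "\<kappa> = 1" by simp
  thus ?thesis using m0 by (simp add: \<kappa>_def)
qed

lemma A_norm_preserving:
  assumes "n \<ge> 2" "m > 0" "\<forall>k\<ge>n. u k = 0"
  shows "(\<Sum>a<m. (cmod (lin_form n (\<lambda>k. A k a) u))^2) = normsq n u"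
  using line_invariants(1)[OF assms(3)] isometry_constant[OF assms(1,2)] assms(2) by simp

lemma A_isotropic:
  assumes "n \<ge> 2" "m > 0" "\<forall>k\<ge>n. u k = 0"
  shows "(\<Sum>a<m. (lin_form n (\<lambda>k. A k a) u)^2) = 0"
  using image_sum_sq[OF assms(3,2)] isometry_constant[OF assms(1,2)] assms(2) by simp

end

section \<open>Degree-one rational isometries are linear fractional\<close>

lemma mpoly_deg_le_1_support:
  assumes "is_mpoly n c" "mpoly_deg n c \<le> 1" "c \<alpha> \<noteq> 0"
  shows "\<alpha> = (\<lambda>_. 0) \<or> (\<exists>k<n. \<alpha> = (\<lambda>i. if i = k then 1 else 0))"
proof -
  have "finite ((\<lambda>\<alpha>. \<Sum>k<n. \<alpha> k) ` {\<alpha>. c \<alpha> \<noteq> 0})" using assms(1) by (simp add: is_mpoly_def)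
  moreover have "{(\<Sum>k<n. \<alpha> k) | \<alpha>. c \<alpha> \<noteq> 0} = (\<lambda>\<alpha>. \<Sum>k<n. \<alpha> k) ` {\<alpha>. c \<alpha> \<noteq> 0}" by auto
  ultimately have "(\<Sum>k<n. \<alpha> k) \<le> mpoly_deg n c"
    unfolding mpoly_deg_def using assms(3) by (intro Max_ge) auto
  hence sm: "(\<Sum>k<n. \<alpha> k) \<le> 1" using assms(2) by simp
  have hi: "\<forall>k\<ge>n. \<alpha> k = 0" using assms(1,3) by (simp add: is_mpoly_def)
  show ?thesis
  proof (cases "\<exists>k<n. \<alpha> k \<noteq> 0")
    case False
    hence "\<alpha> = (\<lambda>_. 0)" using hi by (metis not_le)
    thus ?thesis by simp
  next
    case True
    then obtain k where k: "k < n" "\<alpha> k \<noteq> 0" by blast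
    have "\<alpha> k + (\<Sum>i\<in>{..<n}-{k}. \<alpha> i) \<le> 1"
      using sm k by (simp add: sum.remove)
    hence ak: "\<alpha> k = 1" and rest: "(\<Sum>i\<in>{..<n}-{k}. \<alpha> i) = 0" using k(2) by linarith+
    have "\<forall>i\<in>{..<n}-{k}. \<alpha> i = 0" using rest by simp
    hence "\<alpha> = (\<lambda>i. if i = k then 1 else 0)" using hi ak by (intro ext) (metis Diff_iff lessThan_iff not_le singletonD)
    thus ?thesis using k by blast
  qed
qed

lemma mpoly_eval_deg_le_1:
  assumes "is_mpoly n c" "mpoly_deg n c \<le> 1"
  shows "mpoly_eval n c z = c (\<lambda>_. 0) + lin_form n (\<lambda>k. c (\<lambda>i. if i = k then 1 else 0)) z"
proof -
  define e where "e = (\<lambda>k::nat. \<lambda>i::nat. if i = k then 1::nat else 0)"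
  define E where "E = insert (\<lambda>_. 0) (e ` {..<n})"
  have SE: "{\<alpha>. c \<alpha> \<noteq> 0} \<subseteq> E"
    using mpoly_deg_le_1_support[OF assms] by (auto simp: E_def e_def)
  have e0: "(\<lambda>_. 0) \<notin> e ` {..<n}" by (auto simp: e_def fun_eq_iff) (metis zero_neq_one)
  have "mpoly_eval n c z = (\<Sum>\<alpha>\<in>E. c \<alpha> * (\<Prod>k<n. z k ^ \<alpha> k))"
    unfolding mpoly_eval_def by (rule sum.mono_neutral_left) (use SE in \<open>auto simp: E_def\<close>)
  also have "\<dots> = c (\<lambda>_. 0) + (\<Sum>\<alpha>\<in>e ` {..<n}. c \<alpha> * (\<Prod>k<n. z k ^ \<alpha> k))"
    unfolding E_def using e0 by simp
  also have "(\<Sum>\<alpha>\<in>e ` {..<n}. c \<alpha> * (\<Prod>k<n. z k ^ \<alpha> k)) = (\<Sum>k<n. c (e k) * (\<Prod>i<n. z i ^ e k i))"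
    by (rule sum.reindex_cong[where l=e]) (auto simp: inj_on_def e_def fun_eq_iff)
  also have "(\<Sum>k<n. c (e k) * (\<Prod>i<n. z i ^ e k i)) = (\<Sum>k<n. c (e k) * z k)"
  proof (rule sum.cong[OF refl])
    fix k assume "k \<in> {..<n}"
    hence "(\<Prod>i<n. z i ^ e k i) = (\<Prod>i\<in>{k}. z i ^ e k i)"
      by (intro prod.mono_neutral_right) (auto simp: e_def)
    thus "c (e k) * (\<Prod>i<n. z i ^ e k i) = c (e k) * z k" by (simp add: e_def)
  qed
  finally show ?thesis by (simp add: e_def lin_form_def)
qed

lemma cmod_le_sqrt_normsq:
  assumes "k < n"
  shows "cmod (w k) \<le> sqrt (normsq n w)"
proof -
  have "(cmod (w k))^2 \<le> normsq n w"
    unfolding normsq_def using assms by (intro member_le_sum) auto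
  thus ?thesis by (simp add: real_le_rsqrt)
qed

lemma cdiff_at_local_bound:
  assumes "cdiff_at n f z"
  obtains C d where "d > 0" and "\<And>w. \<forall>k\<ge>n. w k = 0 \<Longrightarrow> sqrt (normsq n (\<lambda>k. w k - z k)) < d \<Longrightarrow>
      cmod (f w - f z) \<le> C * sqrt (normsq n (\<lambda>k. w k - z k))"
proof -
  obtain a d where d: "d > 0" and approx: "\<And>w. \<forall>k\<ge>n. w k = 0 \<Longrightarrow> sqrt (normsq n (\<lambda>k. w k - z k)) < d \<Longrightarrow>
      cmod (f w - f z - (\<Sum>k<n. a k * (w k - z k))) \<le> 1 * sqrt (normsq n (\<lambda>k. w k - z k))"
    using assms unfolding cdiff_at_def by (meson zero_less_one)
  have "cmod (f w - f z) \<le> (1 + (\<Sum>k<n. cmod (a k))) * sqrt (normsq n (\<lambda>k. w k - z k))"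
    if "\<forall>k\<ge>n. w k = 0" "sqrt (normsq n (\<lambda>k. w k - z k)) < d" for w
  proof -
    define N where "N = sqrt (normsq n (\<lambda>k. w k - z k))"
    have "cmod (\<Sum>k<n. a k * (w k - z k)) \<le> (\<Sum>k<n. cmod (a k) * N)"
      by (rule order_trans[OF norm_sum sum_mono])
        (use cmod_le_sqrt_normsq[of _ n "\<lambda>k. w k - z k"] in \<open>auto simp: N_def norm_mult intro: mult_left_mono\<close>)
    moreover have "cmod (f w - f z) \<le> cmod (f w - f z - (\<Sum>k<n. a k * (w k - z k))) + cmod (\<Sum>k<n. a k * (w k - z k))"
      by (metis diff_add_cancel norm_triangle_ineq)
    ultimately show ?thesis using approx[OF that] by (simp add: N_def sum_distrib_right algebra_simps)
  qed
  thus ?thesis using that d by blast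
qed

lemma cdiff_at_const_on_ray:
  assumes cd: "cdiff_at n f (\<lambda>_. 0)" and w0: "\<forall>k\<ge>n. w0 k = 0" and \<delta>: "\<delta> > 0"
    and K: "\<And>t::real. 0 < t \<Longrightarrow> t < \<delta> \<Longrightarrow> f (\<lambda>k. of_real t * w0 k) = K"
  shows "K = f (\<lambda>_. 0)"
proof -
  obtain C d where d: "d > 0" and bound0: "\<And>w. \<forall>k\<ge>n. w k = 0 \<Longrightarrow> sqrt (normsq n (\<lambda>k. w k - 0)) < d \<Longrightarrow>
      cmod (f w - f (\<lambda>_. 0)) \<le> C * sqrt (normsq n (\<lambda>k. w k - 0))"
    using cdiff_at_local_bound[OF cd] by blast
  have bound: "cmod (f w - f (\<lambda>_. 0)) \<le> C * sqrt (normsq n w)"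
    if "\<forall>k\<ge>n. w k = 0" "sqrt (normsq n w) < d" for w
    using bound0[of w] that by simp
  define N where "N = sqrt (normsq n w0)"
  have norm_ray: "sqrt (normsq n (\<lambda>k. of_real t * w0 k)) = t * N" if "t > 0" for t
    using that by (simp add: normsq_scale real_sqrt_mult N_def)
  have "\<forall>\<^sub>F t in at_right 0. cmod (K - f (\<lambda>_. 0)) \<le> C * (t * N)"
  proof -
    have "((\<lambda>t. t * N) \<longlongrightarrow> 0 * N) (at_right 0)" by (intro tendsto_intros)
    hence "\<forall>\<^sub>F t in at_right 0. t * N < d" using order_tendstoD(2)[of _ "0 * N" _ d] d by simp
    moreover have "\<forall>\<^sub>F t in at_right 0. 0 < t \<and> t < \<delta>"
      using \<delta> by (auto simp: eventually_at_right_field)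
    ultimately show ?thesis
    proof eventually_elim
      case (elim t)
      have "cmod (f (\<lambda>k. of_real t * w0 k) - f (\<lambda>_. 0)) \<le> C * sqrt (normsq n (\<lambda>k. of_real t * w0 k))"
        by (rule bound) (use w0 norm_ray[of t] elim in auto)
      thus ?case using K[of t] norm_ray[of t] elim by simp
    qed
  qed
  moreover have "((\<lambda>t. C * (t * N)) \<longlongrightarrow> C * (0 * N)) (at_right 0)"
    by (intro tendsto_intros)
  ultimately have "cmod (K - f (\<lambda>_. 0)) \<le> C * (0 * N)"
    by (intro tendsto_le[OF trivial_limit_at_right_real]) auto
  thus ?thesis by simp
qed

lemma zero_in_unit_ball: "(\<lambda>_. 0) \<in> unit_ball n"
  by (simp add: unit_ball_def normsq_def)

lemma bergman_coeff_K_ball_diag_ne_0: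
  assumes S1: "normsq n z < 1" and j: "j < n"
  shows "bergman_coeff (K_ball n) j j z \<noteq> 0"
proof -
  define S where "S = normsq n z"
  have "bergman_coeff (K_ball n) j j z
      = complex_of_real (real (n+1) * (1 / (1 - S) + (cmod (z j))^2 / (1 - S)^2))"
    using bergman_coeff_K_ball[OF S1 j j] by (simp add: S_def of_real_cmod_power2 mult.commute)
  moreover have "real (n+1) * (1 / (1 - S) + (cmod (z j))^2 / (1 - S)^2) > 0"
    using S1 by (simp add: S_def add_pos_nonneg)
  ultimately show ?thesis by (metis of_real_eq_0_iff order_less_irrefl)
qed

lemma homogeneous_quotient_eq_0:
  fixes r :: "nat \<Rightarrow> complex" and A :: "nat \<Rightarrow> nat \<Rightarrow> complex"
  assumes cd: "cdiff_at n (\<lambda>w. F w a) (\<lambda>_. 0)" and F0: "F (\<lambda>_. 0) a = 0"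
    and eq: "\<And>z. z \<in> unit_ball n \<Longrightarrow> lin_form n r z * F z a = lin_form n (\<lambda>k. A k a) z"
    and w: "w \<in> unit_ball n" and rw: "lin_form n r w \<noteq> 0"
  shows "F w a = 0"
proof -
  have "F w a = F (\<lambda>_. 0) a"
  proof (rule cdiff_at_const_on_ray[OF cd _ zero_less_one])
    show "\<forall>k\<ge>n. w k = 0" using w by (simp add: unit_ball_def)
    fix t :: real assume t: "0 < t" "t < 1"
    have "normsq n w \<ge> 0" unfolding normsq_def by (simp add: sum_nonneg)
    moreover have "t^2 \<le> 1" using t by (simp add: power_le_one)
    ultimately have "t^2 * normsq n w \<le> normsq n w" by (simp add: mult_left_le_one_le)
    hence "t^2 * normsq n w < 1" using w by (simp add: unit_ball_def)
    hence tw: "(\<lambda>k. of_real t * w k) \<in> unit_ball n"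
      using w by (simp add: unit_ball_def normsq_scale)
    have "of_real t * (lin_form n r w * F (\<lambda>k. of_real t * w k) a) = of_real t * lin_form n (\<lambda>k. A k a) w"
      using eq[OF tw] by (simp add: lin_form_scale mult.assoc)
    hence "lin_form n r w * F (\<lambda>k. of_real t * w k) a = lin_form n r w * F w a"
      using eq[OF w] t by simp
    thus "F (\<lambda>k. of_real t * w k) a = F w a" using rw by simp
  qed
  thus ?thesis using F0 by simp
qed

lemma no_isometry_homogeneous_quotient:
  fixes r :: "nat \<Rightarrow> complex" and A :: "nat \<Rightarrow> nat \<Rightarrow> complex"
  assumes hol: "holomorphic_map n m (unit_ball n) F"
    and pullback_eq: "\<forall>z\<in>unit_ball n. \<forall>j<n. \<forall>k<n.
        pullback_coeff m (bergman_coeff (K_IV m)) F j k z = complex_of_real c * bergman_coeff (K_ball n) j k z"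
    and c0: "c > 0" and F0: "\<forall>j<m. F (\<lambda>_. 0) j = 0"
    and eq: "\<forall>z\<in>unit_ball n. \<forall>a<m. lin_form n r z * F z a = lin_form n (\<lambda>k. A k a) z"
    and k0: "k0 < n" and rk0: "r k0 \<noteq> 0"
  shows False
proof -
  define z1 where "z1 = coord_vec k0 (1/2)"
  have S1: "normsq n z1 = 1/4" unfolding z1_def normsq_coord_vec[OF k0] by (simp add: power2_eq_square)
  have z1b: "z1 \<in> unit_ball n" unfolding unit_ball_def using S1 coord_vec_vanishes[OF k0] by (simp add: z1_def)
  have rz1: "lin_form n r z1 = r k0 / 2" unfolding z1_def lin_form_coord_vec[OF k0] by simp
  have "dz k0 (\<lambda>w. F w a) z1 = 0" if a: "a < m" for a
  proof -
    have "\<exists>\<delta>>0. \<forall>\<zeta>. cmod \<zeta> < \<delta> \<longrightarrow> min (1 - (normsq n z1 - (cmod (z1 k0))^2 + (cmod (z1 k0 + \<zeta>))^2)) (cmod (lin_form n r z1 + r k0 * \<zeta>)) > 0"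
      by (rule pos_near_0) (use S1 rz1 rk0 in \<open>auto intro!: continuous_intros\<close>)
    then obtain \<delta> where dp: "\<delta> > 0" and dd: "\<And>\<zeta>. cmod \<zeta> < \<delta> \<Longrightarrow> min (1 - (normsq n z1 - (cmod (z1 k0))^2 + (cmod (z1 k0 + \<zeta>))^2)) (cmod (lin_form n r z1 + r k0 * \<zeta>)) > 0"
      by blast
    show ?thesis
    proof (rule dz_eq_0I[OF dp])
      fix \<zeta> :: complex assume zz: "cmod \<zeta> < \<delta>"
      show "F (z1(k0 := z1 k0 + \<zeta>)) a = 0"
      proof (rule homogeneous_quotient_eq_0[where F=F and r=r and A=A and n=n])
        show "cdiff_at n (\<lambda>w. F w a) (\<lambda>_. 0)" using hol zero_in_unit_ball a by (simp add: holomorphic_map_def)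
        show "F (\<lambda>_. 0) a = 0" using F0 a by simp
        show "lin_form n r z * F z a = lin_form n (\<lambda>k. A k a) z" if "z \<in> unit_ball n" for z
          using eq that a by blast
        show "z1(k0 := z1 k0 + \<zeta>) \<in> unit_ball n"
          using dd[OF zz] normsq_fun_upd[OF k0, of z1 "z1 k0 + \<zeta>"] z1b k0 by (auto simp: unit_ball_def)
        show "lin_form n r (z1(k0 := z1 k0 + \<zeta>)) \<noteq> 0" using dd[OF zz] by (simp add: lin_form_fun_upd[OF k0])
      qed
    qed
  qed
  hence "pullback_coeff m (bergman_coeff (K_IV m)) F k0 k0 z1 = 0"
    unfolding pullback_coeff_def by simp
  hence "bergman_coeff (K_ball n) k0 k0 z1 = 0" using pullback_eq z1b k0 c0 by simp
  thus False using bergman_coeff_K_ball_diag_ne_0[OF _ k0] S1 by simp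
qed

lemma rational_rep_of_rat_deg:
  assumes "is_rational_map n m F"
  shows "rational_rep n m F (rat_deg n m F)"
  using assms unfolding is_rational_map_def rat_deg_def by (blast intro: LeastI)

lemma rational_rep_1_affine:
  assumes rep: "rational_rep n m F 1" and F0: "\<forall>j<m. F (\<lambda>_. 0) j = 0"
  obtains R0 r A where "R0 \<noteq> 0 \<or> (\<exists>k<n. r k \<noteq> 0)"
    and "\<And>z a. z \<in> unit_ball n \<Longrightarrow> a < m \<Longrightarrow> (R0 + lin_form n r z) * F z a = lin_form n (\<lambda>k. A k a) z"
proof -
  obtain P R where isR: "is_mpoly n R" and Rne: "\<exists>\<alpha>. R \<alpha> \<noteq> 0" and dR: "mpoly_deg n R \<le> 1"
      and Ps: "\<forall>j<m. is_mpoly n (P j) \<and> mpoly_deg n (P j) \<le> 1"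
      and eq: "\<forall>z\<in>unit_ball n. \<forall>j<m. mpoly_eval n R z * F z j = mpoly_eval n (P j) z"
    using rep unfolding rational_rep_def by blast
  define e where "e = (\<lambda>k::nat. \<lambda>i::nat. if i = k then 1::nat else 0)"
  have evR: "mpoly_eval n R z = R (\<lambda>_. 0) + lin_form n (\<lambda>k. R (e k)) z" for z
    unfolding e_def by (rule mpoly_eval_deg_le_1[OF isR dR])
  have evP: "mpoly_eval n (P j) z = P j (\<lambda>_. 0) + lin_form n (\<lambda>k. P j (e k)) z" if "j < m" for j z
    unfolding e_def by (rule mpoly_eval_deg_le_1) (use Ps that in auto)
  have P0: "P j (\<lambda>_. 0) = 0" if "j < m" for j
  proof -
    have "mpoly_eval n R (\<lambda>_. 0) * F (\<lambda>_. 0) j = mpoly_eval n (P j) (\<lambda>_. 0)"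
      using eq zero_in_unit_ball that by blast
    thus ?thesis using F0 that evP[OF that, of "\<lambda>_. 0"] by (simp add: lin_form_def)
  qed
  show ?thesis
  proof (rule that[of "R (\<lambda>_. 0)" "\<lambda>k. R (e k)" "\<lambda>k a. P a (e k)"])
    obtain \<alpha> where "R \<alpha> \<noteq> 0" using Rne by blast
    thus "R (\<lambda>_. 0) \<noteq> 0 \<or> (\<exists>k<n. R (e k) \<noteq> 0)"
      using mpoly_deg_le_1_support[OF isR dR] unfolding e_def by metis
    show "(R (\<lambda>_. 0) + lin_form n (\<lambda>k. R (e k)) z) * F z a = lin_form n (\<lambda>k. P a (e k)) z"
      if "z \<in> unit_ball n" "a < m" for z a
      using eq that evR evP[OF that(2)] P0[OF that(2)] by simp
  qed
qed

lemma lin_frac_isometry_of_degree_1: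
  assumes iso: "holo_isometry n m F" and rep: "rational_rep n m F 1" and F0: "\<forall>j<m. F (\<lambda>_. 0) j = 0"
  obtains r A c where "lin_frac_isometry n m F r A c"
proof -
  obtain c where c0: "c > 0" and pullback_eq: "\<forall>z\<in>unit_ball n. \<forall>j<n. \<forall>k<n.
        pullback_coeff m (bergman_coeff (K_IV m)) F j k z = complex_of_real c * bergman_coeff (K_ball n) j k z"
    and maps_to: "\<forall>z\<in>unit_ball n. F z \<in> typeIV m" and hol: "holomorphic_map n m (unit_ball n) F"
    using iso unfolding holo_isometry_def by blast
  obtain R0 r A where nondeg: "R0 \<noteq> 0 \<or> (\<exists>k<n. r k \<noteq> 0)"
    and eq: "\<And>z a. z \<in> unit_ball n \<Longrightarrow> a < m \<Longrightarrow> (R0 + lin_form n r z) * F z a = lin_form n (\<lambda>k. A k a) z"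
    using rational_rep_1_affine[OF rep F0] by blast
  have R0: "R0 \<noteq> 0"
  proof
    assume "R0 = 0"
    then obtain k where "k < n" "r k \<noteq> 0" using nondeg by blast
    moreover have "\<forall>z\<in>unit_ball n. \<forall>a<m. lin_form n r z * F z a = lin_form n (\<lambda>k. A k a) z"
      using eq \<open>R0 = 0\<close> by simp
    ultimately show False using no_isometry_homogeneous_quotient[OF hol pullback_eq c0 F0] by blast
  qed
  have div: "lin_form n (\<lambda>k. f k / R0) z = lin_form n f z / R0" for f z
    unfolding lin_form_def by (simp add: sum_divide_distrib)
  have "lin_frac_isometry n m F (\<lambda>k. r k / R0) (\<lambda>k a. A k a / R0) c"
  proof
    fix z a assume "z \<in> unit_ball n" "a < m"
    thus "(1 + lin_form n (\<lambda>k. r k / R0) z) * F z a = lin_form n (\<lambda>k. A k a / R0) z"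
      using eq R0 unfolding div[of r] div[of "\<lambda>k. A k a"] by (simp add: field_simps)
  qed (use pullback_eq maps_to c0 in auto)
  thus ?thesis using that by blast
qed

section \<open>Completing orthonormal rows to an orthogonal matrix\<close>

definition orthonormal_rows :: "nat \<Rightarrow> nat \<Rightarrow> (nat \<Rightarrow> nat \<Rightarrow> real) \<Rightarrow> bool" where
  "orthonormal_rows k m V \<longleftrightarrow> (\<forall>i<k. \<forall>j<k. (\<Sum>l<m. V i l * V j l) = (if i = j then 1 else 0))"

lemma sum_kronecker_left:
  fixes f :: "nat \<Rightarrow> real"
  assumes "i < m"
  shows "(\<Sum>j<m. (if i = j then 1 else 0) * f j) = f i"
  using assms by (simp add: if_distrib[of "\<lambda>x. x * f _"] sum.delta cong: if_cong)

lemma orthogonal_mat_id: "orthogonal_mat m (\<lambda>i j. if i = j then 1 else 0)"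
  unfolding orthogonal_mat_def by (simp add: if_distrib[of "\<lambda>x. x * _"] sum.delta cong: if_cong)

lemma orthogonal_mat_mult:
  assumes H: "orthogonal_mat m H" and Q: "orthogonal_mat m Q"
  shows "orthogonal_mat m (\<lambda>i l. \<Sum>j<m. H i j * Q j l)"
  unfolding orthogonal_mat_def
proof (intro allI impI)
  fix l l' assume l: "l < m" "l' < m"
  have "(\<Sum>i<m. (\<Sum>j<m. H i j * Q j l) * (\<Sum>j'<m. H i j' * Q j' l'))
      = (\<Sum>i<m. \<Sum>j<m. \<Sum>j'<m. (H i j * H i j') * (Q j l * Q j' l'))"
    unfolding sum_product by (intro sum.cong refl) (simp add: algebra_simps)
  also have "\<dots> = (\<Sum>j<m. \<Sum>i<m. \<Sum>j'<m. (H i j * H i j') * (Q j l * Q j' l'))"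
    by (rule sum.swap)
  also have "\<dots> = (\<Sum>j<m. \<Sum>j'<m. \<Sum>i<m. (H i j * H i j') * (Q j l * Q j' l'))"
    by (intro sum.cong refl sum.swap)
  also have "\<dots> = (\<Sum>j<m. \<Sum>j'<m. (if j = j' then 1 else 0) * (Q j l * Q j' l'))"
    using H by (simp add: orthogonal_mat_def sum_distrib_right[symmetric])
  also have "\<dots> = (\<Sum>j<m. Q j l * Q j l')"
    by (intro sum.cong refl) (simp add: sum_kronecker_left)
  also have "\<dots> = (if l = l' then 1 else 0)" using Q l by (simp add: orthogonal_mat_def)
  finally show "(\<Sum>i<m. (\<Sum>j<m. H i j * Q j l) * (\<Sum>j'<m. H i j' * Q j' l')) = (if l = l' then 1 else 0)" .
qed

lemma orthogonal_mat_householder: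
  fixes w :: "nat \<Rightarrow> real"
  assumes nw: "(\<Sum>j<m. (w j)^2) \<noteq> 0"
  shows "orthogonal_mat m (\<lambda>i j. (if i = j then 1 else 0) - 2 * w i * w j / (\<Sum>j<m. (w j)^2))"
  unfolding orthogonal_mat_def
proof (intro allI impI)
  fix i l assume il: "i < m" "l < m"
  define N where "N = (\<Sum>j<m. (w j)^2)"
  have "(\<Sum>j<m. ((if j = i then 1 else 0) - 2 * w j * w i / N) * ((if j = l then 1 else 0) - 2 * w j * w l / N))
     = (\<Sum>j<m. (if i = j then 1 else 0) * (if l = j then 1 else 0) - (2 * w l / N) * ((if i = j then 1 else 0) * w j)
         - (2 * w i / N) * ((if l = j then 1 else 0) * w j) + (4 * w i * w l / N^2) * (w j)^2)"
    by (intro sum.cong refl) (auto simp: algebra_simps power2_eq_square)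
  also have "\<dots> = (\<Sum>j<m. (if i = j then 1 else 0) * (if l = j then 1 else 0)) - (2 * w l / N) * (\<Sum>j<m. (if i = j then 1 else 0) * w j)
         - (2 * w i / N) * (\<Sum>j<m. (if l = j then 1 else 0) * w j) + (4 * w i * w l / N^2) * (\<Sum>j<m. (w j)^2)"
    by (simp only: sum.distrib sum_subtractf sum_distrib_left)
  also have "\<dots> = (if i = l then 1 else 0)"
    using il nw by (simp add: sum_kronecker_left N_def power2_eq_square)
  finally show "(\<Sum>j<m. ((if j = i then 1 else 0) - 2 * w j * w i / (\<Sum>j<m. (w j)^2))
      * ((if j = l then 1 else 0) - 2 * w j * w l / (\<Sum>j<m. (w j)^2))) = (if i = l then 1 else 0)"
    by (simp add: N_def)
qed

lemma orthogonal_coords: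
  assumes Q: "orthogonal_mat m Q" and l: "l < m"
  shows "(\<Sum>i<m. (\<Sum>l'<m. v l' * Q i l') * Q i l) = v l"
proof -
  have "(\<Sum>i<m. (\<Sum>l'<m. v l' * Q i l') * Q i l) = (\<Sum>i<m. \<Sum>l'<m. v l' * (Q i l' * Q i l))"
    by (simp add: sum_distrib_right mult.assoc)
  also have "\<dots> = (\<Sum>l'<m. v l' * (\<Sum>i<m. Q i l' * Q i l))"
    by (subst sum.swap) (simp add: sum_distrib_left)
  also have "\<dots> = (\<Sum>l'<m. (if l = l' then 1 else 0) * v l')"
    using Q l by (intro sum.cong refl) (auto simp: orthogonal_mat_def)
  finally show ?thesis using sum_kronecker_left[OF l] by simp
qed

lemma sum_power2_orthogonal_coords:
  assumes Q: "orthogonal_mat m Q"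
  shows "(\<Sum>i<m. (\<Sum>l<m. v l * Q i l)^2) = (\<Sum>l<m. (v l)^2)"
proof -
  have "(\<Sum>i<m. (\<Sum>l<m. v l * Q i l)^2) = (\<Sum>i<m. \<Sum>l<m. v l * ((\<Sum>l'<m. v l' * Q i l') * Q i l))"
    unfolding power2_eq_square by (simp add: sum_distrib_right algebra_simps)
  also have "\<dots> = (\<Sum>l<m. v l * (\<Sum>i<m. (\<Sum>l'<m. v l' * Q i l') * Q i l))"
    by (subst sum.swap) (simp add: sum_distrib_left)
  finally show ?thesis using orthogonal_coords[OF Q] by (simp add: power2_eq_square)
qed

lemma unit_vector_eq_basis:
  fixes y :: "nat \<Rightarrow> real"
  assumes y: "(\<Sum>i<m. (y i)^2) = 1" and k: "k < m" and yk: "y k = 1" and i: "i < m"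
  shows "y i = (if i = k then 1 else 0)"
proof -
  have "(\<Sum>i\<in>{..<m} - {k}. (y i)^2) = 0"
    using y yk k by (simp add: sum.remove)
  hence "\<forall>i\<in>{..<m} - {k}. (y i)^2 = 0" by (subst (asm) sum_nonneg_eq_0_iff) auto
  thus ?thesis using yk i by auto
qed

lemma householder_exchange:
  fixes y :: "nat \<Rightarrow> real"
  assumes y: "(\<Sum>i<m. (y i)^2) = 1" and k: "k < m" and yk: "y k \<noteq> 1"
  defines "w \<equiv> (\<lambda>i. (if i = k then 1 else 0) - y i)"
  defines "H \<equiv> (\<lambda>i j. (if i = j then 1 else 0) - 2 * w i * w j / (\<Sum>j<m. (w j)^2))"
  shows "orthogonal_mat m H"
    and "H k j = y j"
    and "i \<noteq> k \<Longrightarrow> y i = 0 \<Longrightarrow> H i j = (if i = j then 1 else 0)"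
proof -
  have "(\<Sum>i<m. (w i)^2) = (\<Sum>i<m. (if i = k then 1 - 2 * y i else 0) + (y i)^2)"
    by (intro sum.cong refl) (auto simp: w_def power2_eq_square algebra_simps)
  hence nw: "(\<Sum>i<m. (w i)^2) = 2 - 2 * y k" using k y by (simp add: sum.distrib)
  show "orthogonal_mat m H"
    unfolding H_def by (rule orthogonal_mat_householder) (use nw yk in simp)
  have "2 * w k * w j / (\<Sum>j<m. (w j)^2) = w j" using nw yk by (simp add: w_def)
  thus "H k j = y j" by (simp add: H_def w_def)
  show "H i j = (if i = j then 1 else 0)" if "i \<noteq> k" "y i = 0"
    using that by (simp add: H_def w_def)
qed

text \<open>Given an orthogonal Q whose first k rows are those of V, let y be the coordinate
  vector of the row V k with respect to Q; it is orthogonal to e_0, ..., e_(k-1), so the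
  reflection exchanging e_k and y fixes these, and multiplying Q by it also matches row k.\<close>

lemma orthogonal_mat_extend_step:
  assumes Q: "orthogonal_mat m Q" and km: "k < m"
    and QV: "\<forall>i<k. \<forall>l<m. Q i l = V i l" and V: "orthonormal_rows (Suc k) m V"
  obtains Q' where "orthogonal_mat m Q'" and "\<forall>i<Suc k. \<forall>l<m. Q' i l = V i l"
proof -
  define y where "y = (\<lambda>i. \<Sum>l<m. V k l * Q i l)"
  have y_row: "(\<Sum>i<m. y i * Q i l) = V k l" if "l < m" for l
    unfolding y_def by (rule orthogonal_coords[OF Q that])
  have y_low: "y i = 0" if "i < k" for i
  proof -
    have "y i = (\<Sum>l<m. V k l * V i l)" unfolding y_def using QV that by (intro sum.cong refl) auto
    thus ?thesis using V that by (simp add: orthonormal_rows_def)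
  qed
  have y_unit: "(\<Sum>i<m. (y i)^2) = 1"
    unfolding y_def sum_power2_orthogonal_coords[OF Q] using V by (simp add: orthonormal_rows_def power2_eq_square)
  show ?thesis
  proof (cases "y k = 1")
    case True
    have "Q k l = V k l" if "l < m" for l
    proof -
      have "V k l = (\<Sum>i<m. (if k = i then 1 else 0) * Q i l)"
        unfolding y_row[OF that, symmetric]
        by (intro sum.cong refl) (simp add: unit_vector_eq_basis[OF y_unit km True] eq_commute)
      thus ?thesis using sum_kronecker_left[OF km] by simp
    qed
    thus ?thesis using that[OF Q] QV by (metis less_Suc_eq)
  next
    case False
    note H = householder_exchange[OF y_unit km False]
    let ?H = "\<lambda>i j. (if i = j then 1 else 0) - 2 * ((if i = k then 1 else 0) - y i) * ((if j = k then 1 else 0) - y j)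
        / (\<Sum>j<m. ((if j = k then 1 else 0) - y j)^2)"
    have "orthogonal_mat m (\<lambda>i l. \<Sum>j<m. ?H i j * Q j l)"
      by (rule orthogonal_mat_mult[OF H(1) Q])
    moreover have "(\<Sum>j<m. ?H i j * Q j l) = V i l" if "i < Suc k" "l < m" for i l
    proof (cases "i = k")
      case True thus ?thesis using y_row[OF that(2)] H(2) by simp
    next
      case False
      hence ik: "i < k" using that(1) by simp
      have Hi: "?H i j = (if i = j then 1 else 0)" for j using H(3)[OF False y_low[OF ik]] .
      have "(\<Sum>j<m. ?H i j * Q j l) = (\<Sum>j<m. (if i = j then 1 else 0) * Q j l)"
        by (rule sum.cong[OF refl]) (simp only: Hi)
      thus ?thesis using sum_kronecker_left[of i m "\<lambda>j. Q j l"] QV that(2) km ik by simp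
    qed
    ultimately show ?thesis using that by blast
  qed
qed

lemma orthogonal_mat_extend:
  assumes "k \<le> m" and "orthonormal_rows k m V"
  obtains Q where "orthogonal_mat m Q" and "\<forall>i<k. \<forall>l<m. Q i l = V i l"
  using assms
proof (induction k arbitrary: thesis)
  case 0
  thus ?case using orthogonal_mat_id by blast
next
  case (Suc k)
  have "orthonormal_rows k m V" using Suc.prems(3) by (simp add: orthonormal_rows_def)
  then obtain Q where "orthogonal_mat m Q" "\<forall>i<k. \<forall>l<m. Q i l = V i l"
    using Suc.IH Suc.prems(2) by (metis Suc_leD)
  thus ?case using orthogonal_mat_extend_step Suc.prems by (metis Suc_le_lessD)
qed

lemma Re_Im_inner_products:
  fixes A :: "nat \<Rightarrow> nat \<Rightarrow> complex"
  assumes G: "(\<Sum>l<m. A j l * cnj (A k l)) = (if j = k then 1 else 0)"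
    and S: "(\<Sum>l<m. A j l * A k l) = 0"
  shows "(\<Sum>l<m. Re (A j l) * Re (A k l)) = (if j = k then 1/2 else 0)"
    and "(\<Sum>l<m. Im (A j l) * Im (A k l)) = (if j = k then 1/2 else 0)"
    and "(\<Sum>l<m. Re (A j l) * Im (A k l)) = 0"
proof -
  define a where "a = (\<Sum>l<m. Re (A j l) * Re (A k l))"
  define b where "b = (\<Sum>l<m. Im (A j l) * Im (A k l))"
  define c where "c = (\<Sum>l<m. Re (A j l) * Im (A k l))"
  define d where "d = (\<Sum>l<m. Im (A j l) * Re (A k l))"
  have "a + b = (if j = k then 1 else 0)"
    using arg_cong[OF G, of Re] by (simp add: Re_sum a_def b_def sum.distrib)
  moreover have "a - b = 0"
    using arg_cong[OF S, of Re] by (simp add: Re_sum a_def b_def sum_subtractf)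
  moreover have "d - c = 0"
    using arg_cong[OF G, of Im] by (simp add: Im_sum c_def d_def sum_subtractf)
  moreover have "c + d = 0"
    using arg_cong[OF S, of Im] by (simp add: Im_sum c_def d_def sum.distrib)
  ultimately show "a = (if j = k then 1/2 else 0)" "b = (if j = k then 1/2 else 0)" "c = 0"
    by auto
qed

definition Re_Im_frame :: "(nat \<Rightarrow> nat \<Rightarrow> complex) \<Rightarrow> nat \<Rightarrow> nat \<Rightarrow> real" where
  "Re_Im_frame A i l = sqrt 2 * (if even i then Re (A (i div 2) l) else Im (A (i div 2) l))"

lemma Re_Im_frame_orthonormal:
  fixes A :: "nat \<Rightarrow> nat \<Rightarrow> complex"
  assumes G: "\<forall>j<n. \<forall>k<n. (\<Sum>l<m. A j l * cnj (A k l)) = (if j = k then 1 else 0)"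
    and S: "\<forall>j<n. \<forall>k<n. (\<Sum>l<m. A j l * A k l) = 0"
  shows "orthonormal_rows (2 * n) m (Re_Im_frame A)"
  unfolding orthonormal_rows_def
proof (intro allI impI)
  fix i i' assume i: "i < 2 * n" and i': "i' < 2 * n"
  have ij: "i div 2 < n" "i' div 2 < n" using i i' by auto
  note RI = Re_Im_inner_products[OF G[rule_format, OF ij] S[rule_format, OF ij]]
    and IR = Re_Im_inner_products[OF G[rule_format, OF ij(2,1)] S[rule_format, OF ij(2,1)]]
  have scale: "(\<Sum>l<m. (sqrt 2 * f l) * (sqrt 2 * g l)) = 2 * (\<Sum>l<m. f l * g l :: real)" for f g
    by (simp add: sum_distrib_left algebra_simps)
  define d where "d = (if i div 2 = i' div 2 then 1 else (0::real))"
  have RR: "(\<Sum>l<m. (sqrt 2 * Re (A (i div 2) l)) * (sqrt 2 * Re (A (i' div 2) l))) = d"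
    and II: "(\<Sum>l<m. (sqrt 2 * Im (A (i div 2) l)) * (sqrt 2 * Im (A (i' div 2) l))) = d"
    and RI': "(\<Sum>l<m. (sqrt 2 * Re (A (i div 2) l)) * (sqrt 2 * Im (A (i' div 2) l))) = 0"
    and IR': "(\<Sum>l<m. (sqrt 2 * Im (A (i div 2) l)) * (sqrt 2 * Re (A (i' div 2) l))) = 0"
    unfolding scale d_def using RI IR by (simp_all add: mult.commute)
  have eq_iff: "i = i' \<longleftrightarrow> i div 2 = i' div 2 \<and> even i = even i'"
  proof
    assume "i div 2 = i' div 2 \<and> even i = even i'"
    thus "i = i'" by presburger
  qed simp
  show "(\<Sum>l<m. Re_Im_frame A i l * Re_Im_frame A i' l) = (if i = i' then 1 else 0)"
  proof (cases "even i"; cases "even i'")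
    assume "even i" "even i'" thus ?thesis using RR eq_iff by (simp add: Re_Im_frame_def d_def)
  next
    assume "even i" "odd i'" thus ?thesis using RI' eq_iff by (simp add: Re_Im_frame_def)
  next
    assume "odd i" "even i'" thus ?thesis using IR' eq_iff by (simp add: Re_Im_frame_def)
  next
    assume "odd i" "odd i'" thus ?thesis using II eq_iff by (simp add: Re_Im_frame_def d_def)
  qed
qed

lemma sum_lessThan_double:
  fixes f :: "nat \<Rightarrow> 'a::comm_monoid_add"
  shows "(\<Sum>i<2*n. f i) = (\<Sum>k<n. f (2*k) + f (2*k+1))"
  by (induction n) (simp_all add: algebra_simps)

lemma model_vec_Re_Im_frame:
  "(\<Sum>i<2*n. model_vec n z i * complex_of_real (Re_Im_frame A i j)) = (\<Sum>k<n. A k j * z k)"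
  unfolding sum_lessThan_double
proof (intro sum.cong refl)
  fix k assume k: "k \<in> {..<n}"
  have s2: "complex_of_real (sqrt 2 / 2) * complex_of_real (sqrt 2) = 1"
    by (simp flip: of_real_mult)
  have "model_vec n z (2*k) * complex_of_real (Re_Im_frame A (2*k) j) + model_vec n z (2*k+1) * complex_of_real (Re_Im_frame A (2*k+1) j)
      = z k * (complex_of_real (sqrt 2 / 2) * complex_of_real (sqrt 2)) * (complex_of_real (Re (A k j)) + \<i> * complex_of_real (Im (A k j)))"
    using k by (simp add: model_vec_def Re_Im_frame_def algebra_simps)
  also have "\<dots> = A k j * z k" unfolding s2 complex_eq[of "A k j", symmetric] by simp
  finally show "model_vec n z (2*k) * complex_of_real (Re_Im_frame A (2*k) j) + model_vec n z (2*k+1) * complex_of_real (Re_Im_frame A (2*k+1) j) = A k j * z k" .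
qed

theorem mainTheorem10:
  fixes n m :: nat and F :: "(nat \<Rightarrow> complex) \<Rightarrow> (nat \<Rightarrow> complex)"
  assumes "n \<ge> 2" and "m \<ge> 2 * n"
    and "holo_isometry n m F"
    and "is_rational_map n m F"
    and "\<forall>j<m. F (\<lambda>_. 0) j = 0"
    and "rat_deg n m F = 1"
  shows "\<exists>Q. orthogonal_mat m Q \<and>
           (\<forall>z\<in>unit_ball n. \<forall>j<m. F z j = (\<Sum>i<m. model_vec n z i * complex_of_real (Q i j)))"
proof -
  have m0: "m > 0" using assms(1,2) by simp
  obtain r A c where "lin_frac_isometry n m F r A c"
    using lin_frac_isometry_of_degree_1 assms(3,5) rational_rep_of_rat_deg[OF assms(4)] assms(6) by metis
  then interpret lin_frac_isometry n m F r A c .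
  have "orthonormal_rows (2 * n) m (Re_Im_frame A)"
    using orthonormal_rows_if_norm_preserving[OF A_norm_preserving[OF assms(1) m0]]
      isotropic_rows_if_sum_sq_eq_0[OF A_isotropic[OF assms(1) m0]]
    by (intro Re_Im_frame_orthonormal) auto
  then obtain Q where Q: "orthogonal_mat m Q" and QV: "\<forall>i<2*n. \<forall>l<m. Q i l = Re_Im_frame A i l"
    using orthogonal_mat_extend assms(2) by blast
  have "F z j = (\<Sum>i<m. model_vec n z i * complex_of_real (Q i j))" if z: "z \<in> unit_ball n" and j: "j < m" for z j
  proof -
    have "(\<Sum>i<m. model_vec n z i * complex_of_real (Q i j)) = (\<Sum>i<2*n. model_vec n z i * complex_of_real (Q i j))"
      by (rule sum.mono_neutral_right) (use assms(2) in \<open>auto simp: model_vec_def\<close>)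
    also have "\<dots> = (\<Sum>k<n. A k j * z k)" using QV j by (simp add: model_vec_Re_Im_frame)
    also have "\<dots> = lin_form n (\<lambda>k. A k j) z" by (simp add: lin_form_def mult.commute)
    also have "\<dots> = F z j" using lin_frac[OF z j] lin_form_r_eq_0[of z] by simp
    finally show ?thesis by simp
  qed
  thus ?thesis using Q by blast
qed

end
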